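(* Let $N\ge2$, $\alpha,\beta>-1$, let $\{x_j,\omega_j\}_{j=0}^N$ be the JGL nodes and weights, and let $Q_j^\mu$ be the Caputo fractional Birkhoff basis polynomials defined below. (i) For $\mu\in(0,1)$ and $1\le j\le N$, $$ Q_j^\mu(x)=\frac{1}{(1+x_j)^{1-\mu}}\sum_{l=0}^{N-1}\frac{\Gamma(l-\mu+2)}{l!}\,\breve\xi_{lj}\int_{-1}^xP_l(t)\,dt, $$ where $\breve\xi_{lj}=\sum_{n=l}^{N-1}{}^{(\alpha,\beta)}C^{(\mu-1,1-\mu)}_{ln}\,\xi_{nj}$ and $$ \xi_{nj}=\frac{1}{\gamma_n^{(\alpha,\beta)}}\Big\{-\frac{c_j}{\beta+1}\frac{P_N^{(\alpha,\beta)}(-1)}{P_N^{(\alpha,\beta)}(x_j)}P_n^{(\alpha,\beta)}(-1)\,\omega_0+P_n^{(\alpha,\beta)}(x_j)\,\omega_j\Big\}, $$ with $c_j=1$ for $1\le j\le N-1$ and $c_N=\alpha+1$. (ii) For $\mu\in(1,2)$ and $1\le j\le N-1$, $$ Q_j^\mu(x)=\frac{1}{(1+x_j)^{2-\mu}}\sum_{l=0}^{N-2}\frac{\Gamma(l-\mu+3)}{l!}\,\breve\xi_{lj}\,\Phi_l(x), $$ where $\breve\xi_{lj}=\sum_{n=l}^{N-2}{}^{(\alpha,\beta)}C^{(\mu-2,2-\mu)}_{ln}\,\xi_{nj}$, $$ \xi_{nj}=\frac{1}{\gamma_n^{(\alpha,\beta)}}\Big\{\frac{(x_j-1)P_N^{(\alpha,\beta)}(-1)}{2(\beta+1)P_N^{(\alpha,\beta)}(x_j)}P_n^{(\alpha,\beta)}(-1)\,\omega_0-\frac{(1+x_j)P_N^{(\alpha,\beta)}(1)}{2(\alpha+1)P_N^{(\alpha,\beta)}(x_j)}P_n^{(\alpha,\beta)}(1)\,\omega_N+P_n^{(\alpha,\beta)}(x_j)\,\omega_j\Big\},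 $$ and $\Phi_l(x)=\frac{1+x}{2}\int_{-1}^1(t-1)P_l(t)\,dt+\int_{-1}^x(x-t)P_l(t)\,dt$.
   Context: For $\rho>0$, $(I_-^\rho u)(x)=\frac{1}{\Gamma(\rho)}\int_{-1}^x (x-y)^{\rho-1}u(y)\,dy$, $D^k=d^k/dx^k$, and for $\mu\in(k-1,k)$ the Caputo derivative is ${}^C D_-^\mu u=I_-^{k-\mu}(D^k u)$. Caputo fractional Birkhoff basis: for $\mu\in(0,1)$, $Q_j^\mu\in\mathcal P_N$ ($1\le j\le N$) satisfies ${}^C D_-^\mu Q_j^\mu(x_i)=\delta_{ij}$ ($1\le i\le N$) and $Q_j^\mu(-1)=0$; for $\mu\in(1,2)$, $Q_j^\mu\in\mathcal P_N$ ($1\le j\le N-1$) satisfies ${}^C D_-^\mu Q_j^\mu(x_i)=\delta_{ij}$ ($1\le i\le N-1$) and $Q_j^\mu(\pm1)=0$. Jacobi polynomials are in Szegő's normalization: $P_n^{(\alpha,\beta)}(x)=\frac{\Gamma(n+\alpha+1)}{n!\Gamma(\alpha+1)}\,{}_2F_1\big(-n,n+\alpha+\beta+1;\alpha+1;\tfrac{1-x}{2}\big)$, $P_0^{(\alpha,\beta)}=1$, $P_n=P_n^{(0,0)}$. For $\alpha,\beta>-1$, $\gamma_n^{(\alpha,\beta)}=\frac{2^{\alpha+\beta+1}\Gamma(n+\alpha+1)\Gamma(n+\beta+1)}{(2n+\alpha+\beta+1)\,n!\,\Gamma(n+\alpha+\beta+1)}$. Connection coefficients: for $\alpha,\beta,a,b>-1$,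 ${}^{(\alpha,\beta)}C^{(a,b)}_{ln}$ are the unique numbers with $P_n^{(\alpha,\beta)}=\sum_{l=0}^n {}^{(\alpha,\beta)}C^{(a,b)}_{ln}P_l^{(a,b)}$. JGL nodes $x_0<\dots<x_N$ are the zeros of $(1-x^2)\frac{d}{dx}P_N^{(\alpha,\beta)}$ ($x_0=-1$, $x_N=1$) and the weights $\omega_j$ make $\int_{-1}^1\phi(1-x)^\alpha(1+x)^\beta dx=\sum_j\phi(x_j)\omega_j$ exact for $\phi\in\mathcal P_{2N-1}$. *)

theory Defs
  imports "HOL-Analysis.Analysis" "HOL-Computational_Algebra.Polynomial"
begin

text \<open>Jacobi polynomials in Szego's normalisation, via the terminating 2F1 series.\<close>
definition jacobi :: "real \<Rightarrow> real \<Rightarrow> nat \<Rightarrow> real \<Rightarrow> real" where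
  "jacobi a b n x =
     Gamma (real n + a + 1) / (fact n * Gamma (a + 1)) *
     (\<Sum>k\<le>n. pochhammer (- real n) k * pochhammer (real n + a + b + 1) k
               / (pochhammer (a + 1) k * fact k) * ((1 - x) / 2) ^ k)"

definition legendre :: "nat \<Rightarrow> real \<Rightarrow> real" where
  "legendre n = jacobi 0 0 n"

text \<open>Normalisation constants gamma_n^(a,b). For n = 0 the product
  (a+b+1) Gamma(a+b+1) is read as Gamma(a+b+2) (removable singularity at a+b = -1).\<close>
definition jacobi_gamma :: "real \<Rightarrow> real \<Rightarrow> nat \<Rightarrow> real" where
  "jacobi_gamma a b n =
     (if n = 0 then 2 powr (a + b + 1) * Gamma (a + 1) * Gamma (b + 1) / Gamma (a + b + 2)
      else 2 powr (a + b + 1) * Gamma (real n + a + 1) * Gamma (real n + b + 1)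
           / ((2 * real n + a + b + 1) * fact n * Gamma (real n + a + b + 1)))"

definition conn_coeff :: "real \<Rightarrow> real \<Rightarrow> real \<Rightarrow> real \<Rightarrow> nat \<Rightarrow> nat \<Rightarrow> real" where
  "conn_coeff al be a b l n =
     (THE c. (\<forall>x. jacobi al be n x = (\<Sum>i\<le>n. c i * jacobi a b i x)) \<and> (\<forall>i>n. c i = 0)) l"

definition frac_int :: "real \<Rightarrow> (real \<Rightarrow> real) \<Rightarrow> real \<Rightarrow> real" where
  "frac_int \<rho> u x = (1 / Gamma \<rho>) * integral {-1..x} (\<lambda>y. (x - y) powr (\<rho> - 1) * u y)"

definition caputo :: "real \<Rightarrow> (real \<Rightarrow> real) \<Rightarrow> real \<Rightarrow> real" where
  "caputo \<mu> u x = (let k = nat \<lceil>\<mu>\<rceil> in frac_int (real k - \<mu>) ((deriv ^^ k) u) x)"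

definition JGL :: "real \<Rightarrow> real \<Rightarrow> nat \<Rightarrow> (nat \<Rightarrow> real) \<Rightarrow> (nat \<Rightarrow> real) \<Rightarrow> bool" where
  "JGL al be N xs w \<longleftrightarrow>
     strict_mono_on {0..N} xs \<and> xs 0 = -1 \<and> xs N = 1 \<and>
     {t. (1 - t\<^sup>2) * deriv (jacobi al be N) t = 0} = xs ` {0..N} \<and>
     (\<forall>p :: real poly. degree p \<le> 2 * N - 1 \<longrightarrow>
        ((\<lambda>t. poly p t * (1 - t) powr al * (1 + t) powr be) has_integral
           (\<Sum>j\<le>N. poly p (xs j) * w j)) {-1..1})"

definition birkhoff1 :: "real \<Rightarrow> nat \<Rightarrow> (nat \<Rightarrow> real) \<Rightarrow> nat \<Rightarrow> real poly \<Rightarrow> bool" where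
  "birkhoff1 \<mu> N xs j q \<longleftrightarrow> degree q \<le> N \<and>
     (\<forall>i\<in>{1..N}. caputo \<mu> (poly q) (xs i) = (if i = j then 1 else 0)) \<and> poly q (-1) = 0"

definition birkhoff2 :: "real \<Rightarrow> nat \<Rightarrow> (nat \<Rightarrow> real) \<Rightarrow> nat \<Rightarrow> real poly \<Rightarrow> bool" where
  "birkhoff2 \<mu> N xs j q \<longleftrightarrow> degree q \<le> N \<and>
     (\<forall>i\<in>{1..N-1}. caputo \<mu> (poly q) (xs i) = (if i = j then 1 else 0)) \<and>
     poly q (-1) = 0 \<and> poly q 1 = 0"

end

theory Submission
  imports Defs "HOL-Computational_Algebra.Formal_Power_Series"
begin

text \<open>For \<open>k - 1 < \<mu> < k\<close> the Caputo derivative of a polynomial \<open>d\<close> is \<open>(1 + x)^(k-\<mu>)\<close>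
  times a polynomial in \<open>1 + x\<close> of degree \<open>deg d - k\<close> whose coefficients are positive
  multiples of those of \<open>d^(k)\<close>; counting roots shows that both Birkhoff problems have at most
  one solution.

  For existence let \<open>p_j\<close> be the Lagrange basis polynomial at the nodes carrying a Caputo
  condition (the roots of \<open>(1 - x) P_N'\<close> for \<open>k = 1\<close>, of \<open>P_N'\<close> for \<open>k = 2\<close>); its values at
  \<open>\<plusminus>1\<close> follow from the Jacobi differential equation.  Gauss-Jacobi-Lobatto quadrature is exact
  for \<open>P_m P_n\<close> with \<open>m, n < N\<close>, so the coefficients \<open>\<xi>_nj\<close> of \<open>p_j\<close> in the Jacobi basis are
  discrete inner products with \<open>p_j\<close>, which is where the nodal formulas come from.  Converting
  to the basis \<open>P_l^(\<mu>-k,k-\<mu>)\<close> and replacing each of its members by a \<open>k\<close>-fold antiderivative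
  of the Legendre polynomial \<open>P_l\<close> gives, by Bateman's formula
  \<open>I^(k-\<mu>) P_l = l! / \<Gamma>(l + 1 + k - \<mu>) (1 + x)^(k-\<mu>) P_l^(\<mu>-k,k-\<mu>)\<close>, a polynomial whose
  Caputo derivative is \<open>((1 + x) / (1 + x_j))^(k-\<mu>) p_j(x)\<close>, i.e. \<open>\<delta>_ij\<close> at the nodes.\<close>

definition jacobi_coeff :: "real \<Rightarrow> real \<Rightarrow> nat \<Rightarrow> nat \<Rightarrow> real" where
  "jacobi_coeff a b n k = Gamma (real n + a + 1) / (fact n * Gamma (a + 1)) *
     (pochhammer (- real n) k * pochhammer (real n + a + b + 1) k / (pochhammer (a + 1) k * fact k))"

text \<open>The hypergeometric series of \<open>jacobi\<close> as a polynomial in \<open>t = (1 - x) / 2\<close>.\<close>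
definition jacobi_hyp_poly :: "real \<Rightarrow> real \<Rightarrow> nat \<Rightarrow> real poly" where
  "jacobi_hyp_poly a b n = (\<Sum>k\<le>n. monom (jacobi_coeff a b n k) k)"

definition jacobi_poly :: "real \<Rightarrow> real \<Rightarrow> nat \<Rightarrow> real poly" where
  "jacobi_poly a b n = pcompose (jacobi_hyp_poly a b n) [:1/2, -1/2:]"

lemma jacobi_coeff_eq_0: "n < k \<Longrightarrow> jacobi_coeff a b n k = 0"
  unfolding jacobi_coeff_def using pochhammer_of_nat_eq_0_lemma[of n k, where 'a=real] by simp

lemma coeff_jacobi_hyp_poly: "coeff (jacobi_hyp_poly a b n) k = jacobi_coeff a b n k"
  unfolding jacobi_hyp_poly_def by (auto simp: coeff_sum jacobi_coeff_eq_0)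

lemma poly_jacobi_hyp_poly: "poly (jacobi_hyp_poly a b n) t = (\<Sum>k\<le>n. jacobi_coeff a b n k * t ^ k)"
  unfolding jacobi_hyp_poly_def by (simp add: poly_sum poly_monom)

lemma poly_jacobi_poly: "poly (jacobi_poly a b n) x = jacobi a b n x"
  unfolding jacobi_poly_def jacobi_def poly_pcompose poly_jacobi_hyp_poly jacobi_coeff_def
  by (simp add: sum_distrib_left mult_ac diff_divide_distrib)

lemma jacobi_eq_poly: "jacobi a b n = poly (jacobi_poly a b n)"
  by (simp add: fun_eq_iff poly_jacobi_poly)

lemma jacobi_poly_eq_sum: "jacobi_poly a b n = (\<Sum>k\<le>n. smult (jacobi_coeff a b n k) ([:1/2, -1/2:] ^ k))"
  by (simp add: poly_eq_poly_eq_iff[symmetric] fun_eq_iff jacobi_poly_def poly_pcompose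
      poly_jacobi_hyp_poly poly_sum)

lemma jacobi_coeff_Suc:
  assumes a: "a > -1"
  shows "real (Suc k) * (real k + a + 1) * jacobi_coeff a b n (Suc k) =
         (real k - real n) * (real k + real n + a + b + 1) * jacobi_coeff a b n k"
proof -
  define C where "C = Gamma (real n + a + 1) / (fact n * Gamma (a + 1))"
  define P1 where "P1 = pochhammer (- real n) k"
  define P2 where "P2 = pochhammer (real n + a + b + 1) k"
  define P3 where "P3 = pochhammer (a + 1) k"
  have P3: "P3 > 0" unfolding P3_def using a by (intro pochhammer_pos) auto
  have "real k + a + 1 > 0" using a by simp
  then have d: "(real k + a + 1) * real (Suc k) \<noteq> 0" by simp
  have "jacobi_coeff a b n (Suc k) =
      C * (P1 * (real k - real n)) * (P2 * (real n + a + b + 1 + real k))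
        / (P3 * (a + 1 + real k) * (real (Suc k) * fact k))"
    unfolding jacobi_coeff_def C_def P1_def P2_def P3_def pochhammer_rec' fact_Suc
    by (simp add: mult_ac)
  also have "\<dots> = (real k - real n) * (real k + real n + a + b + 1)
      * (C * (P1 * P2 / (P3 * fact k))) / ((real k + a + 1) * real (Suc k))"
    by (simp add: field_simps)
  also have "C * (P1 * P2 / (P3 * fact k)) = jacobi_coeff a b n k"
    unfolding jacobi_coeff_def C_def P1_def P2_def P3_def by simp
  finally show ?thesis using d by (simp add: field_simps)
qed

lemma jacobi_coeff_top_neq_0:
  assumes a: "a > -1" and b: "b > -1"
  shows "jacobi_coeff a b n n \<noteq> 0"
proof -
  have "pochhammer (real n + a + b + 1) n \<noteq> 0"
  proof
    assume "pochhammer (real n + a + b + 1) n = 0"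
    then obtain k where "k < n" "real n + a + b + 1 = - of_nat k"
      by (auto simp: pochhammer_eq_0_iff)
    then show False using a b by linarith
  qed
  moreover have "Gamma (real n + a + 1) > 0" "Gamma (a + 1) > 0" "pochhammer (a + 1) n > 0"
    using a by (auto intro: pochhammer_pos)
  ultimately show ?thesis unfolding jacobi_coeff_def by (simp add: pochhammer_same)
qed

lemma degree_jacobi_hyp_poly:
  assumes "a > -1" "b > -1"
  shows "degree (jacobi_hyp_poly a b n) = n"
proof (rule antisym)
  show "degree (jacobi_hyp_poly a b n) \<le> n"
    by (rule degree_le) (simp add: coeff_jacobi_hyp_poly jacobi_coeff_eq_0)
  show "n \<le> degree (jacobi_hyp_poly a b n)"
    by (rule le_degree) (simp add: coeff_jacobi_hyp_poly jacobi_coeff_top_neq_0 assms)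
qed

lemma degree_jacobi_poly:
  assumes "a > -1" "b > -1"
  shows "degree (jacobi_poly a b n) = n"
  unfolding jacobi_poly_def by (simp add: degree_pcompose degree_jacobi_hyp_poly assms)

lemma lead_coeff_jacobi_poly_neq_0:
  assumes "a > -1" "b > -1"
  shows "coeff (jacobi_poly a b n) n \<noteq> 0"
proof -
  have "coeff (jacobi_poly a b n) n = lead_coeff (jacobi_poly a b n)"
    using degree_jacobi_poly[OF assms] by simp
  also have "\<dots> = lead_coeff (jacobi_hyp_poly a b n) * (-1/2) ^ degree (jacobi_hyp_poly a b n)"
    unfolding jacobi_poly_def by (subst lead_coeff_comp) auto
  finally show ?thesis
    using degree_jacobi_hyp_poly[OF assms] jacobi_coeff_top_neq_0[OF assms]
    by (simp add: coeff_jacobi_hyp_poly)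
qed

lemma jacobi_hyp_poly_ode:
  assumes a: "a > -1"
  shows "[:0, 1, -1:] * pderiv (pderiv (jacobi_hyp_poly a b n))
          + [:a + 1, -(a + b + 2):] * pderiv (jacobi_hyp_poly a b n)
          + smult (real n * (real n + a + b + 1)) (jacobi_hyp_poly a b n) = 0"
proof (rule poly_eqI)
  fix k
  show "coeff ([:0, 1, -1:] * pderiv (pderiv (jacobi_hyp_poly a b n))
          + [:a + 1, -(a + b + 2):] * pderiv (jacobi_hyp_poly a b n)
          + smult (real n * (real n + a + b + 1)) (jacobi_hyp_poly a b n)) k = coeff 0 k"
    using jacobi_coeff_Suc[OF a, of k b n] by (cases k; cases "k - 1")
      (auto simp: coeff_pderiv coeff_jacobi_hyp_poly algebra_simps numeral_2_eq_2)
qed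

lemma jacobi_poly_ode:
  assumes a: "a > -1"
  shows "(1 - x\<^sup>2) * poly (pderiv (pderiv (jacobi_poly a b n))) x
          + (b - a - (a + b + 2) * x) * poly (pderiv (jacobi_poly a b n)) x
          + real n * (real n + a + b + 1) * poly (jacobi_poly a b n) x = 0"
proof -
  let ?F = "jacobi_hyp_poly a b n"
  define t where "t = (1 - x) / 2"
  have d1: "pderiv (jacobi_poly a b n) = pcompose (pderiv ?F) [:1/2, -1/2:] * [:-1/2:]"
    unfolding jacobi_poly_def by (simp add: pderiv_pcompose pderiv_pCons)
  have d2: "pderiv (pderiv (jacobi_poly a b n)) = pcompose (pderiv (pderiv ?F)) [:1/2, -1/2:] * [:1/4:]"
    unfolding d1 by (simp add: pderiv_pcompose pderiv_pCons pderiv_mult pderiv_minus pderiv_smult)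
  have ode: "poly ([:0, 1, -1:] * pderiv (pderiv ?F) + [:a + 1, -(a + b + 2):] * pderiv ?F
          + smult (real n * (real n + a + b + 1)) ?F) t = 0"
    using jacobi_hyp_poly_ode[OF a, of b n] by simp
  have q0: "poly (jacobi_poly a b n) x = poly ?F t"
    unfolding jacobi_poly_def t_def by (simp add: poly_pcompose diff_divide_distrib)
  have q1: "poly (pderiv (jacobi_poly a b n)) x = - poly (pderiv ?F) t / 2"
    unfolding d1 t_def by (simp add: poly_pcompose diff_divide_distrib)
  have q2: "poly (pderiv (pderiv (jacobi_poly a b n))) x = poly (pderiv (pderiv ?F)) t / 4"
    unfolding d2 t_def by (simp add: poly_pcompose diff_divide_distrib)
  have x: "x = 1 - 2 * t" unfolding t_def by (simp add: field_simps)
  show ?thesis unfolding q0 q1 q2 using ode unfolding x by (simp add: field_simps power2_eq_square)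
qed

text \<open>Coefficients of the Jacobi polynomial in powers of \<open>(1 + x) / 2\<close>, read off from the
  symmetry \<open>P_n^(a,b)(x) = (-1)^n P_n^(b,a)(-x)\<close>.\<close>
definition jacobi_coeff_plus :: "real \<Rightarrow> real \<Rightarrow> nat \<Rightarrow> nat \<Rightarrow> real" where
  "jacobi_coeff_plus a b n p = (-1) ^ n * Gamma (real n + b + 1) / (fact n * Gamma (b + 1)) *
     (pochhammer (- real n) p * pochhammer (real n + a + b + 1) p / (pochhammer (b + 1) p * fact p))"

lemma jacobi_coeff_shift:
  assumes a: "a > -1" and p: "p \<le> n"
  shows "jacobi_coeff a b n (p + i) * of_nat ((p + i) choose p) =
    jacobi_coeff a b n p * (pochhammer (real n + a + b + 1 + real p) i * pochhammer (- real (n - p)) i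
      / (fact i * pochhammer (a + 1 + real p) i))"
proof -
  have c: "real ((p + i) choose p) = fact (p + i) / (fact p * fact i)"
    by (simp add: binomial_fact)
  have "real p - real n = - real (n - p)" using p by (simp add: of_nat_diff)
  moreover have "pochhammer (a + 1) p > 0" "pochhammer (a + 1 + real p) i > 0"
    using a by (auto intro: pochhammer_pos)
  ultimately show ?thesis
    unfolding jacobi_coeff_def pochhammer_product' c by (simp add: field_simps)
qed

lemma Gamma_shift_eq_pochhammer_mult:
  fixes a :: real
  assumes "a > -1"
  shows "Gamma (real n + a + 1) = pochhammer (a + 1) n * Gamma (a + 1)"
proof -
  have "a + 1 \<notin> \<int>\<^sub>\<le>\<^sub>0" using assms by (auto elim!: nonpos_Ints_cases)
  moreover have "Gamma (a + 1) > 0" using assms by simp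
  ultimately show ?thesis using pochhammer_Gamma[of "a + 1" n] by (simp add: add_ac)
qed

lemma jacobi_coeff_eq_pochhammer:
  assumes a: "a > -1" and p: "p \<le> n"
  shows "jacobi_coeff a b n p = pochhammer (a + 1 + real p) (n - p)
    * pochhammer (- real n) p * pochhammer (real n + a + b + 1) p / (fact n * fact p)"
proof -
  have "pochhammer (a + 1) n = pochhammer (a + 1) p * pochhammer (a + 1 + real p) (n - p)"
    using p pochhammer_product'[of "a + 1" p "n - p"] by simp
  moreover have "pochhammer (a + 1) p > 0" "Gamma (a + 1) > 0"
    using a by (auto intro: pochhammer_pos)
  ultimately show ?thesis
    unfolding jacobi_coeff_def Gamma_shift_eq_pochhammer_mult[OF a] by (simp add: field_simps)
qed

lemma jacobi_coeff_plus_eq_pochhammer: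
  assumes b: "b > -1" and p: "p \<le> n"
  shows "jacobi_coeff_plus a b n p = (-1) ^ n * pochhammer (b + 1 + real p) (n - p)
    * pochhammer (- real n) p * pochhammer (real n + a + b + 1) p / (fact n * fact p)"
proof -
  have "pochhammer (b + 1) n = pochhammer (b + 1) p * pochhammer (b + 1 + real p) (n - p)"
    using p pochhammer_product'[of "b + 1" p "n - p"] by simp
  moreover have "pochhammer (b + 1) p > 0" "Gamma (b + 1) > 0"
    using b by (auto intro: pochhammer_pos)
  ultimately show ?thesis
    unfolding jacobi_coeff_plus_def Gamma_shift_eq_pochhammer_mult[OF b] by (simp add: field_simps)
qed

lemma jacobi_coeff_binomial_sum:
  assumes a: "a > -1" and b: "b > -1" and p: "p \<le> n"
  shows "(\<Sum>k\<le>n. jacobi_coeff a b n k * of_nat (k choose p)) * (-1) ^ p = jacobi_coeff_plus a b n p"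
proof -
  define m where "m = n - p"
  define M where "M = real n + a + b + 1"
  have "(\<Sum>k\<le>n. jacobi_coeff a b n k * of_nat (k choose p))
      = (\<Sum>k\<in>{p..p + m}. jacobi_coeff a b n k * of_nat (k choose p))"
    using p unfolding m_def by (intro sum.mono_neutral_right) auto
  also have "\<dots> = (\<Sum>i\<in>{0..m}. jacobi_coeff a b n (p + i) * of_nat ((p + i) choose p))"
    using sum.shift_bounds_cl_nat_ivl[of "\<lambda>k. jacobi_coeff a b n k * of_nat (k choose p)" 0 p m]
    by (simp add: add.commute)
  also have "\<dots> = jacobi_coeff a b n p * (\<Sum>i\<in>{0..m}. pochhammer (M + real p) i
      * pochhammer (- real m) i / (fact i * pochhammer (a + 1 + real p) i))"
    unfolding sum_distrib_left m_def M_def using a p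
    by (intro sum.cong refl) (simp add: jacobi_coeff_shift)
  also have "(\<Sum>i\<in>{0..m}. pochhammer (M + real p) i * pochhammer (- real m) i
      / (fact i * pochhammer (a + 1 + real p) i))
      = pochhammer (a + 1 + real p - (M + real p)) m / pochhammer (a + 1 + real p) m"
    by (rule Vandermonde_pochhammer[simplified]) (use a in auto)
  also have "a + 1 + real p - (M + real p) = - (real n + b)" unfolding M_def by simp
  also have "pochhammer (- (real n + b)) m = (-1) ^ m * pochhammer (b + 1 + real p) m"
    unfolding pochhammer_minus m_def using p by (simp add: of_nat_diff algebra_simps)
  finally show ?thesis
    using p pochhammer_pos[of "a + 1 + real p" m] a
    unfolding jacobi_coeff_eq_pochhammer[OF a p] jacobi_coeff_plus_eq_pochhammer[OF b p] m_def
    by (simp add: field_simps power_add[symmetric])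
qed

lemma jacobi_eq_sum_plus:
  assumes a: "a > -1" and b: "b > -1"
  shows "jacobi a b n x = (\<Sum>p\<le>n. jacobi_coeff_plus a b n p * ((1 + x) / 2) ^ p)"
proof -
  define s where "s = (1 + x) / 2"
  have "jacobi a b n x = (\<Sum>k\<le>n. jacobi_coeff a b n k * (- s + 1) ^ k)"
    unfolding poly_jacobi_poly[symmetric] jacobi_poly_def poly_pcompose poly_jacobi_hyp_poly s_def
    by (intro sum.cong refl) (simp add: field_simps)
  also have "\<dots> = (\<Sum>k\<le>n. \<Sum>p\<le>n. jacobi_coeff a b n k * of_nat (k choose p) * (- s) ^ p)"
  proof (intro sum.cong refl)
    fix k assume k: "k \<in> {..n}"
    have "(- s + 1) ^ k = (\<Sum>p\<le>n. of_nat (k choose p) * (- s) ^ p)"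
      unfolding binomial_ring using k by simp (intro sum.mono_neutral_left, auto)
    then show "jacobi_coeff a b n k * (- s + 1) ^ k
        = (\<Sum>p\<le>n. jacobi_coeff a b n k * of_nat (k choose p) * (- s) ^ p)"
      by (simp add: sum_distrib_left mult.assoc)
  qed
  also have "\<dots> = (\<Sum>p\<le>n. (\<Sum>k\<le>n. jacobi_coeff a b n k * of_nat (k choose p)) * (-1) ^ p * s ^ p)"
    by (subst sum.swap) (simp add: sum_distrib_right power_minus[of s] mult.assoc)
  also have "\<dots> = (\<Sum>p\<le>n. jacobi_coeff_plus a b n p * s ^ p)"
    by (intro sum.cong refl) (simp add: jacobi_coeff_binomial_sum[OF a b])
  finally show ?thesis unfolding s_def .
qed

lemma jacobi_poly_eq_sum_plus:
  assumes "a > -1" "b > -1"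
  shows "jacobi_poly a b n = (\<Sum>p\<le>n. smult (jacobi_coeff_plus a b n p / 2 ^ p) ([:1, 1:] ^ p))"
  by (simp add: poly_eq_poly_eq_iff[symmetric] fun_eq_iff poly_jacobi_poly jacobi_eq_sum_plus[OF assms]
      poly_sum power_divide)

lemma jacobi_coeff_plus_top:
  assumes "b > -1"
  shows "jacobi_coeff_plus a b n n = pochhammer (real n + a + b + 1) n / fact n"
  using jacobi_coeff_plus_eq_pochhammer[OF assms order.refl, of a]
  by (simp add: pochhammer_same field_simps flip: power_add)

lemma has_integral_Beta_interval:
  fixes u v A B :: real
  assumes uv: "u < v" and A: "A > 0" and B: "B > 0"
  shows "((\<lambda>t. (t - u) powr (A - 1) * (v - t) powr (B - 1)) has_integral
           (v - u) powr (A + B - 1) * Beta A B) {u..v}"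
proof -
  define h where "h = v - u"
  have h: "h > 0" using uv unfolding h_def by simp
  have "((\<lambda>s. s powr (A - 1) * (1 - s) powr (B - 1)) has_integral Beta A B) (cbox 0 1)"
    unfolding cbox_interval by (rule has_integral_Beta_real[OF A B])
  note affine = has_integral_affinity'[OF this, of "1 / h" "- u / h"]
  have "(0 - - u / h) /\<^sub>R (1 / h) = u" "(1 - - u / h) /\<^sub>R (1 / h) = v"
    "Beta A B /\<^sub>R (1 / h) ^ DIM(real) = h * Beta A B"
    using h by (simp_all add: h_def distrib_left)
  moreover have "(1 / h) *\<^sub>R t + - u / h = (t - u) / h" "1 - (t - u) / h = (v - t) / h" for t
  proof -
    have "v = h + u" unfolding h_def by simp
    then show "(1 / h) *\<^sub>R t + - u / h = (t - u) / h" "1 - (t - u) / h = (v - t) / h"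
      using h by (simp_all add: field_simps)
  qed
  ultimately have "((\<lambda>t. ((t - u) / h) powr (A - 1) * ((v - t) / h) powr (B - 1)) has_integral h * Beta A B) {u..v}"
    using affine h by (simp add: cbox_interval)
  then have I: "((\<lambda>t. h powr (A + B - 2) * (((t - u) / h) powr (A - 1) * ((v - t) / h) powr (B - 1)))
      has_integral h powr (A + B - 2) * (h * Beta A B)) {u..v}"
    by (rule has_integral_mult_right)
  have val: "h powr (A + B - 2) * (h * Beta A B) = h powr (A + B - 1) * Beta A B"
    using h by (simp add: powr_add[symmetric] powr_diff field_simps power2_eq_square)
  have pt: "h powr (A + B - 2) * (((t - u) / h) powr (A - 1) * ((v - t) / h) powr (B - 1))
      = (t - u) powr (A - 1) * (v - t) powr (B - 1)" if "t \<in> {u..v}" for t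
  proof -
    have "h powr (A - 1) * h powr (B - 1) = h powr (A + B - 2)"
      by (simp add: powr_add[symmetric])
    moreover have "h powr (A - 1) > 0" "h powr (B - 1) > 0" using h by auto
    ultimately show ?thesis using that h by (simp add: powr_divide field_simps)
  qed
  show ?thesis
    unfolding h_def[symmetric] val[symmetric] by (rule has_integral_eq[OF pt I])
qed

lemma power_mult_powr:
  fixes x :: real
  assumes "x \<ge> 0"
  shows "x ^ n * x powr a = x powr (a + real n)"
  using assms by (cases "x = 0") (simp_all add: powr_add powr_realpow)

lemma has_integral_jacobi_weight_moment:
  assumes al: "al > -1" and be: "be > -1"
  shows "((\<lambda>t. (1 + t) ^ m * ((1 - t) / 2) ^ k * ((1 - t) powr al * (1 + t) powr be)) has_integral
           2 powr (al + be + real m + 1) * Beta (be + real m + 1) (al + real k + 1)) {-1..1}"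
proof -
  have "((\<lambda>t. (t - -1) powr (be + real m + 1 - 1) * (1 - t) powr (al + real k + 1 - 1)) has_integral
      (1 - -1) powr (be + real m + 1 + (al + real k + 1) - 1) * Beta (be + real m + 1) (al + real k + 1))
      {-1..1}"
    using al be by (intro has_integral_Beta_interval) auto
  then have I: "((\<lambda>t. (1 / 2) ^ k * ((1 + t) powr (be + real m) * (1 - t) powr (al + real k)))
      has_integral (1 / 2) ^ k * (2 powr (al + be + real m + real k + 1)
        * Beta (be + real m + 1) (al + real k + 1))) {-1..1}"
    by (intro has_integral_mult_right) (simp add: add_ac)
  have pt: "(1 / 2) ^ k * ((1 + t) powr (be + real m) * (1 - t) powr (al + real k))
      = (1 + t) ^ m * ((1 - t) / 2) ^ k * ((1 - t) powr al * (1 + t) powr be)" if "t \<in> {-1..1}" for t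
    using that power_mult_powr[of "1 + t" m be] power_mult_powr[of "1 - t" k al]
    by (simp add: power_divide field_simps)
  have "(1 / 2) ^ k * 2 powr (al + be + real m + real k + 1) = (2::real) powr (al + be + real m + 1)"
    by (simp add: powr_add powr_realpow power_one_over field_simps)
  then show ?thesis using has_integral_eq[OF pt I] by (simp add: mult.assoc[symmetric])
qed

definition quad_sum :: "nat \<Rightarrow> (nat \<Rightarrow> real) \<Rightarrow> (nat \<Rightarrow> real) \<Rightarrow> real poly \<Rightarrow> real" where
  "quad_sum N xs w p = (\<Sum>j\<le>N. poly p (xs j) * w j)"

lemma quad_sum_smult: "quad_sum N xs w (smult c p) = c * quad_sum N xs w p"
  unfolding quad_sum_def by (simp add: sum_distrib_left mult_ac)

lemma quad_sum_sum: "quad_sum N xs w (\<Sum>i\<in>A. f i) = (\<Sum>i\<in>A. quad_sum N xs w (f i))"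
  unfolding quad_sum_def by (simp add: poly_sum sum_distrib_right sum.swap[of _ A])

lemma quad_sum_eq_integral:
  assumes "JGL al be N xs w" and "degree p \<le> 2 * N - 1"
    and "((\<lambda>t. poly p t * (1 - t) powr al * (1 + t) powr be) has_integral I) {-1..1}"
  shows "quad_sum N xs w p = I"
  using assms unfolding JGL_def quad_sum_def by (blast intro: has_integral_unique)

lemma quad_sum_moment:
  assumes jgl: "JGL al be N xs w" and al: "al > -1" and be: "be > -1" and mk: "m + k \<le> 2 * N - 1"
  shows "quad_sum N xs w ([:1, 1:] ^ m * [:1/2, -1/2:] ^ k) =
           2 powr (al + be + real m + 1) * Beta (be + real m + 1) (al + real k + 1)"
proof (rule quad_sum_eq_integral[OF jgl])
  have "degree ([:1, 1:] ^ m * [:1/2, -1/2:] ^ k :: real poly) \<le> m + k"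
    by (rule order.trans[OF degree_mult_le]) (intro add_mono order.trans[OF degree_power_le]; simp)
  then show "degree ([:1, 1:] ^ m * [:1/2, -1/2:] ^ k :: real poly) \<le> 2 * N - 1"
    using mk by simp
  show "((\<lambda>t. poly ([:1, 1:] ^ m * [:1/2, -1/2:] ^ k) t * (1 - t) powr al * (1 + t) powr be) has_integral
      2 powr (al + be + real m + 1) * Beta (be + real m + 1) (al + real k + 1)) {-1..1}"
    using has_integral_jacobi_weight_moment[OF al be, of m k]
    by (simp add: diff_divide_distrib mult_ac)
qed

text \<open>The moment \<open>\<integral> (1 + t)^q P_n^(al,be)(t) (1 - t)^al (1 + t)^be dt\<close> over \<open>[-1, 1]\<close>,
  evaluated by Chu-Vandermonde summation of Beta integrals; the last factor vanishes for \<open>q < n\<close>.\<close>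
definition jacobi_moment :: "real \<Rightarrow> real \<Rightarrow> nat \<Rightarrow> nat \<Rightarrow> real" where
  "jacobi_moment al be q n = 2 powr (al + be + real q + 1) * (Gamma (real n + al + 1) * Gamma (be + real q + 1)
       / (fact n * Gamma (al + be + real q + 2))) *
     (pochhammer (real q + 1 - real n) n / pochhammer (al + be + real q + 2) n)"

lemma jacobi_coeff_mult_Beta:
  assumes al: "al > -1" and be: "be > -1"
  shows "jacobi_coeff al be n k * Beta (be + real q + 1) (al + real k + 1) =
     (Gamma (real n + al + 1) * Gamma (be + real q + 1) / (fact n * Gamma (al + be + real q + 2))) *
     (pochhammer (real n + al + be + 1) k * pochhammer (- real n) k /
       (fact k * pochhammer (al + be + real q + 2) k))"
proof -
  define c where "c = al + be + real q + 2"
  have c: "c > 0" using al be unfolding c_def by simp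
  have "Gamma (be + real q + 1 + (al + real k + 1)) = pochhammer c k * Gamma c"
    using Gamma_shift_eq_pochhammer_mult[of "c - 1" k] c unfolding c_def by (simp add: add_ac)
  moreover have "pochhammer (al + 1) k > 0" "pochhammer c k > 0" "Gamma (al + 1) > 0"
    "Gamma c > 0" "Gamma (be + real q + 1) > 0"
    using al be c by (auto intro: pochhammer_pos)
  ultimately show ?thesis
    using Gamma_shift_eq_pochhammer_mult[OF al, of k]
    unfolding jacobi_coeff_def Beta_altdef rGamma_inverse_Gamma c_def[symmetric]
    by (simp add: field_simps add_ac)
qed

lemma quad_sum_power_mult_jacobi:
  assumes jgl: "JGL al be N xs w" and al: "al > -1" and be: "be > -1" and qn: "q + n \<le> 2 * N - 1"
  shows "quad_sum N xs w ([:1, 1:] ^ q * jacobi_poly al be n) = jacobi_moment al be q n"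
proof -
  have "quad_sum N xs w ([:1, 1:] ^ q * jacobi_poly al be n) =
      (\<Sum>k\<le>n. jacobi_coeff al be n k * quad_sum N xs w ([:1, 1:] ^ q * [:1/2, -1/2:] ^ k))"
    unfolding jacobi_poly_eq_sum sum_distrib_left quad_sum_sum by (simp add: quad_sum_smult)
  also have "\<dots> = (\<Sum>k\<le>n. 2 powr (al + be + real q + 1)
      * (jacobi_coeff al be n k * Beta (be + real q + 1) (al + real k + 1)))"
    by (intro sum.cong refl, subst quad_sum_moment[OF jgl al be]) (use qn in auto)
  also have "\<dots> = 2 powr (al + be + real q + 1) *
     (Gamma (real n + al + 1) * Gamma (be + real q + 1) / (fact n * Gamma (al + be + real q + 2))) *
     (\<Sum>k\<in>{0..n}. pochhammer (real n + al + be + 1) k * pochhammer (- real n) k /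
       (fact k * pochhammer (al + be + real q + 2) k))"
    unfolding jacobi_coeff_mult_Beta[OF al be] by (simp only: sum_distrib_left atLeast0AtMost mult.assoc)
  also have "(\<Sum>k\<in>{0..n}. pochhammer (real n + al + be + 1) k * pochhammer (- real n) k /
       (fact k * pochhammer (al + be + real q + 2) k)) =
       pochhammer (al + be + real q + 2 - (real n + al + be + 1)) n / pochhammer (al + be + real q + 2) n"
    by (rule Vandermonde_pochhammer[simplified]) (use al be in auto)
  also have "al + be + real q + 2 - (real n + al + be + 1) = real q + 1 - real n" by simp
  finally show ?thesis unfolding jacobi_moment_def by simp
qed

lemma jacobi_moment_eq_0: "q < n \<Longrightarrow> jacobi_moment al be q n = 0"
  unfolding jacobi_moment_def
  using pochhammer_of_nat_eq_0_lemma[of "n - q - 1" n, where 'a = real]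
  by (simp add: of_nat_diff algebra_simps)

lemma jacobi_coeff_plus_top_mult_moment:
  assumes al: "al > -1" and be: "be > -1"
  shows "jacobi_coeff_plus al be n n / 2 ^ n * jacobi_moment al be n n = jacobi_gamma al be n"
proof (cases "n = 0")
  case True
  then show ?thesis unfolding jacobi_coeff_plus_def jacobi_moment_def jacobi_gamma_def by (simp add: add_ac)
next
  case False
  have S: "al + be + real n + 1 > 0" using al be False by simp
  then have p1: "pochhammer (real n + al + be + 1) n = Gamma (al + be + 2 * real n + 1) / Gamma (al + be + real n + 1)"
    and p2: "pochhammer (al + be + real n + 2) n = Gamma (al + be + 2 * real n + 2) / Gamma (al + be + real n + 2)"
    by (auto simp: pochhammer_Gamma nonpos_Ints_def algebra_simps)
  define D where "D = 2 * real n + al + be + 1"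
  have D: "D > 0" using S unfolding D_def by simp
  have g: "Gamma (al + be + 2 * real n + 2) = D * Gamma (al + be + 2 * real n + 1)"
    using Gamma_plus1[of "al + be + 2 * real n + 1"] D
    unfolding D_def by (simp add: add_ac nonpos_Ints_def)
  have "2 powr (al + be + real n + 1) = 2 powr (al + be + 1) * 2 ^ n"
    by (simp add: powr_add powr_realpow)
  moreover have "Gamma (al + be + real n + 2) \<noteq> 0" "Gamma (al + be + real n + 1) \<noteq> 0"
    "Gamma (al + be + 2 * real n + 1) \<noteq> 0"
    using S by (auto simp: Gamma_eq_zero_iff nonpos_Ints_def)
  ultimately show ?thesis
    unfolding jacobi_coeff_plus_top[OF be] jacobi_moment_def jacobi_gamma_def p1 p2 g D_def[symmetric]
    using False D by (simp add: pochhammer_fact field_simps add_ac)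
qed

lemma quad_sum_jacobi_orthogonal_le:
  assumes jgl: "JGL al be N xs w" and al: "al > -1" and be: "be > -1" and mn: "m \<le> n" and nN: "n < N"
  shows "quad_sum N xs w (jacobi_poly al be m * jacobi_poly al be n) = (if m = n then jacobi_gamma al be n else 0)"
proof -
  have "quad_sum N xs w (jacobi_poly al be m * jacobi_poly al be n)
      = (\<Sum>p\<le>m. jacobi_coeff_plus al be m p / 2 ^ p * jacobi_moment al be p n)"
    unfolding jacobi_poly_eq_sum_plus[OF al be, of m] sum_distrib_right quad_sum_sum mult_smult_left quad_sum_smult
    by (intro sum.cong refl, subst quad_sum_power_mult_jacobi[OF jgl al be]) (use mn nN in auto)
  also have "\<dots> = (\<Sum>p\<in>{m}. jacobi_coeff_plus al be m p / 2 ^ p * jacobi_moment al be p n)"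
    using mn by (intro sum.mono_neutral_right) (auto simp: jacobi_moment_eq_0)
  also have "\<dots> = (if m = n then jacobi_gamma al be n else 0)"
    using mn jacobi_coeff_plus_top_mult_moment[OF al be, of n] by (auto simp: jacobi_moment_eq_0)
  finally show ?thesis .
qed

lemma quad_sum_jacobi_orthogonal:
  assumes jgl: "JGL al be N xs w" and al: "al > -1" and be: "be > -1" and "m < N" "n < N"
  shows "quad_sum N xs w (jacobi_poly al be m * jacobi_poly al be n) = (if m = n then jacobi_gamma al be n else 0)"
  using quad_sum_jacobi_orthogonal_le[OF jgl al be, of m n] quad_sum_jacobi_orthogonal_le[OF jgl al be, of n m] assms
  by (cases "m \<le> n") (auto simp: mult.commute)

lemma graded_basis_spanning:
  fixes B :: "nat \<Rightarrow> 'a::field poly"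
  assumes deg: "\<And>i. degree (B i) \<le> i" and lc: "\<And>i. coeff (B i) i \<noteq> 0" and "degree q \<le> n"
  shows "\<exists>c. q = (\<Sum>i\<le>n. smult (c i) (B i))"
  using assms(3)
proof (induction n arbitrary: q)
  case 0
  have "q = smult (coeff q 0 / coeff (B 0) 0) (B 0)"
  proof (rule poly_eqI)
    fix k
    show "coeff q k = coeff (smult (coeff q 0 / coeff (B 0) 0) (B 0)) k"
      using 0 lc[of 0] deg[of 0] by (cases k) (auto simp: coeff_eq_0)
  qed
  then show ?case by (intro exI[of _ "\<lambda>_. coeff q 0 / coeff (B 0) 0"]) simp
next
  case (Suc n)
  define t where "t = coeff q (Suc n) / coeff (B (Suc n)) (Suc n)"
  define r where "r = q - smult t (B (Suc n))"
  have "degree r \<le> n"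
  proof (rule degree_le, intro allI impI)
    fix i assume i: "n < i"
    show "coeff r i = 0"
    proof (cases "i = Suc n")
      case True
      then show ?thesis unfolding r_def t_def using lc[of "Suc n"] by simp
    next
      case False
      then show ?thesis unfolding r_def using i Suc.prems deg[of "Suc n"] by (simp add: coeff_eq_0)
    qed
  qed
  then obtain c where "r = (\<Sum>i\<le>n. smult (c i) (B i))" using Suc.IH by blast
  then have "q = (\<Sum>i\<le>Suc n. smult ((c(Suc n := t)) i) (B i))"
    unfolding r_def by (simp add: algebra_simps)
  then show ?case by blast
qed

lemma graded_basis_independent:
  fixes B :: "nat \<Rightarrow> 'a::field poly"
  assumes deg: "\<And>i. degree (B i) \<le> i" and lc: "\<And>i. coeff (B i) i \<noteq> 0"
    and "(\<Sum>i\<le>n. smult (c i) (B i)) = 0" and "i \<le> n"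
  shows "c i = 0"
  using assms(3,4)
proof (induction n arbitrary: i)
  case 0
  then have "c 0 = 0 \<or> B 0 = 0" by simp
  then show ?case using 0 lc[of 0] by auto
next
  case (Suc n)
  have "coeff (\<Sum>i\<le>n. smult (c i) (B i)) (Suc n) = 0"
    by (rule coeff_eq_0, rule le_less_trans[OF degree_sum_le])
      (auto intro: le_trans[OF degree_smult_le] le_trans[OF deg])
  then have "c (Suc n) * coeff (B (Suc n)) (Suc n) = 0"
    using arg_cong[OF Suc.prems(1), of "\<lambda>p. coeff p (Suc n)"] by (simp add: coeff_sum)
  then have cS: "c (Suc n) = 0" using lc[of "Suc n"] by simp
  then have "(\<Sum>i\<le>n. smult (c i) (B i)) = 0" using Suc.prems(1) by simp
  then show ?case using Suc.IH cS Suc.prems(2) by (cases "i = Suc n") auto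
qed

lemma conn_coeff:
  assumes al: "al > -1" and be: "be > -1" and a: "a > -1" and b: "b > -1"
  shows jacobi_eq_conn_coeff_sum: "jacobi al be n x = (\<Sum>l\<le>n. conn_coeff al be a b l n * jacobi a b l x)"
    and conn_coeff_eq_0: "n < l \<Longrightarrow> conn_coeff al be a b l n = 0"
proof -
  define P where "P = (\<lambda>c. (\<forall>x. jacobi al be n x = (\<Sum>i\<le>n. c i * jacobi a b i x)) \<and> (\<forall>i>n. c i = (0::real)))"
  obtain c where c: "jacobi_poly al be n = (\<Sum>i\<le>n. smult (c i) (jacobi_poly a b i))"
    using graded_basis_spanning[of "jacobi_poly a b" "jacobi_poly al be n" n]
      degree_jacobi_poly lead_coeff_jacobi_poly_neq_0 a b al be by auto
  define c' where "c' = (\<lambda>i. if i \<le> n then c i else 0)"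
  have Pc: "P c'"
    unfolding P_def c'_def by (auto simp: poly_jacobi_poly[symmetric] c poly_sum intro!: sum.cong)
  have "d = c'" if "P d" for d
  proof
    fix i
    have "poly (jacobi_poly al be n) = poly (\<Sum>i\<le>n. smult (d i) (jacobi_poly a b i))"
      using that unfolding P_def by (auto simp: fun_eq_iff poly_jacobi_poly poly_sum)
    then have sum0: "(\<Sum>i\<le>n. smult (c i - d i) (jacobi_poly a b i)) = 0"
      by (simp add: poly_eq_poly_eq_iff c smult_diff_left sum_subtractf)
    have "c i - d i = 0" if "i \<le> n"
      using graded_basis_independent[OF _ _ sum0 that] degree_jacobi_poly[OF a b]
        lead_coeff_jacobi_poly_neq_0[OF a b] by simp
    then have "i \<le> n \<Longrightarrow> d i = c i" by simp
    then show "d i = c' i" using that unfolding P_def c'_def by auto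
  qed
  then have "(THE c. P c) = c'" using Pc by (intro the_equality)
  then have cc: "conn_coeff al be a b l n = c' l" for l
    unfolding conn_coeff_def P_def by simp
  show "jacobi al be n x = (\<Sum>l\<le>n. conn_coeff al be a b l n * jacobi a b l x)"
    and "n < l \<Longrightarrow> conn_coeff al be a b l n = 0"
    using Pc unfolding P_def cc by blast+
qed

lemma sum_conn_coeff_swap:
  assumes al: "al > -1" and be: "be > -1" and a: "a > -1" and b: "b > -1"
  shows "(\<Sum>l\<le>M. (\<Sum>n=l..M. conn_coeff al be a b l n * \<xi> n) * jacobi a b l x) =
         (\<Sum>n\<le>M. \<xi> n * jacobi al be n x)"
proof -
  let ?C = "conn_coeff al be a b"
  have "(\<Sum>l\<le>M. (\<Sum>n=l..M. ?C l n * \<xi> n) * jacobi a b l x) =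
        (\<Sum>l\<le>M. \<Sum>n\<le>M. ?C l n * \<xi> n * jacobi a b l x)"
  proof (intro sum.cong refl)
    fix l
    have "(\<Sum>n=l..M. ?C l n * \<xi> n) = (\<Sum>n\<le>M. ?C l n * \<xi> n)"
      by (rule sum.mono_neutral_left) (auto simp: conn_coeff_eq_0[OF assms])
    then show "(\<Sum>n=l..M. ?C l n * \<xi> n) * jacobi a b l x = (\<Sum>n\<le>M. ?C l n * \<xi> n * jacobi a b l x)"
      by (simp add: sum_distrib_right)
  qed
  also have "\<dots> = (\<Sum>n\<le>M. \<Sum>l\<le>M. ?C l n * \<xi> n * jacobi a b l x)" by (rule sum.swap)
  also have "\<dots> = (\<Sum>n\<le>M. \<xi> n * jacobi al be n x)"
  proof (intro sum.cong refl)
    fix n assume n: "n \<in> {..M}"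
    have "(\<Sum>l\<le>M. ?C l n * jacobi a b l x) = (\<Sum>l\<le>n. ?C l n * jacobi a b l x)"
      using n by (intro sum.mono_neutral_right) (auto simp: conn_coeff_eq_0[OF assms])
    moreover have "(\<Sum>l\<le>M. ?C l n * \<xi> n * jacobi a b l x) = \<xi> n * (\<Sum>l\<le>M. ?C l n * jacobi a b l x)"
      by (simp add: sum_distrib_left mult_ac)
    ultimately show "(\<Sum>l\<le>M. ?C l n * \<xi> n * jacobi a b l x) = \<xi> n * jacobi al be n x"
      by (simp add: jacobi_eq_conn_coeff_sum[OF assms])
  qed
  finally show ?thesis .
qed

lemma jacobi_gamma_pos:
  assumes "al > -1" and "be > -1"
  shows "jacobi_gamma al be n > 0"
proof (cases "n = 0")
  case False
  then have "2 * real n + al + be + 1 > 0" "real n + al + be + 1 > 0" using assms by auto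
  then show ?thesis using assms False unfolding jacobi_gamma_def by simp
qed (use assms in \<open>simp add: jacobi_gamma_def\<close>)

lemma jacobi_discrete_expansion:
  assumes jgl: "JGL al be N xs w" and al: "al > -1" and be: "be > -1" and M: "M < N"
    and deg: "degree p \<le> M"
  shows "(\<Sum>n\<le>M. quad_sum N xs w (p * jacobi_poly al be n) / jacobi_gamma al be n * jacobi al be n x) = poly p x"
proof -
  obtain d where d: "p = (\<Sum>m\<le>M. smult (d m) (jacobi_poly al be m))"
    using graded_basis_spanning[of "jacobi_poly al be" p M] degree_jacobi_poly lead_coeff_jacobi_poly_neq_0
      al be deg by auto
  have coeffs: "quad_sum N xs w (p * jacobi_poly al be n) = d n * jacobi_gamma al be n" if n: "n \<le> M" for n
  proof -
    have "quad_sum N xs w (p * jacobi_poly al be n)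
        = (\<Sum>m\<le>M. d m * (if m = n then jacobi_gamma al be n else 0))"
      unfolding d sum_distrib_right quad_sum_sum mult_smult_left quad_sum_smult
      by (intro sum.cong refl, subst quad_sum_jacobi_orthogonal[OF jgl al be]) (use n M in auto)
    then show ?thesis using n by (simp add: if_distrib cong: if_cong)
  qed
  then have "(\<Sum>n\<le>M. quad_sum N xs w (p * jacobi_poly al be n) / jacobi_gamma al be n * jacobi al be n x)
      = (\<Sum>n\<le>M. d n * jacobi al be n x)"
  proof (intro sum.cong refl)
    fix n assume "n \<in> {..M}"
    moreover have "jacobi_gamma al be n \<noteq> 0" using jacobi_gamma_pos[OF al be, of n] by simp
    ultimately show "quad_sum N xs w (p * jacobi_poly al be n) / jacobi_gamma al be n * jacobi al be n x
        = d n * jacobi al be n x"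
      using coeffs by simp
  qed
  also have "\<dots> = poly p x" unfolding d by (simp add: poly_sum poly_jacobi_poly)
  finally show ?thesis .
qed

lemma has_integral_frac_power:
  assumes x: "x > -1" and r: "\<rho> > 0"
  shows "((\<lambda>y. (x - y) powr (\<rho> - 1) * (1 + y) ^ p) has_integral
           (1 + x) powr (real p + \<rho>) * Beta (real p + 1) \<rho>) {-1..x}"
proof -
  have "((\<lambda>y. (y - -1) powr (real p + 1 - 1) * (x - y) powr (\<rho> - 1)) has_integral
      (x - -1) powr (real p + 1 + \<rho> - 1) * Beta (real p + 1) \<rho>) {-1..x}"
    using x r by (intro has_integral_Beta_interval) auto
  then have I: "((\<lambda>y. (1 + y) powr real p * (x - y) powr (\<rho> - 1)) has_integral
      (1 + x) powr (real p + \<rho>) * Beta (real p + 1) \<rho>) {-1..x}"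
    by (simp add: add.commute)
  \<comment> \<open>\<open>-1\<close> is a spike: \<open>0 powr 0 = 0\<close> but \<open>0 ^ 0 = 1\<close>\<close>
  show ?thesis
    by (rule has_integral_spike_finite[OF _ _ I, of "{-1}"]) (auto simp: powr_realpow)
qed

lemma frac_int_sum_power:
  assumes x: "x > -1" and r: "\<rho> > 0"
    and u: "\<And>y. u y = (\<Sum>p\<le>M. e p * (1 + y) ^ p)"
  shows "frac_int \<rho> u x =
    (\<Sum>p\<le>M. e p * (Gamma (real p + 1) / Gamma (real p + 1 + \<rho>)) * (1 + x) powr (real p + \<rho>))"
proof -
  have "((\<lambda>y. \<Sum>p\<le>M. e p * ((x - y) powr (\<rho> - 1) * (1 + y) ^ p)) has_integral
           (\<Sum>p\<le>M. e p * ((1 + x) powr (real p + \<rho>) * Beta (real p + 1) \<rho>))) {-1..x}"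
    by (intro has_integral_sum has_integral_mult_right has_integral_frac_power x r) auto
  then have I: "integral {-1..x} (\<lambda>y. (x - y) powr (\<rho> - 1) * u y) =
      (\<Sum>p\<le>M. e p * ((1 + x) powr (real p + \<rho>) * Beta (real p + 1) \<rho>))"
    unfolding u by (intro integral_unique) (simp add: sum_distrib_left mult_ac)
  have ratio: "Beta (real p + 1) \<rho> / Gamma \<rho> = Gamma (real p + 1) / Gamma (real p + 1 + \<rho>)" for p
  proof -
    have "Gamma \<rho> > 0" "Gamma (real p + 1) > 0" "Gamma (real p + 1 + \<rho>) > 0" using r by auto
    then show ?thesis by (simp add: Beta_altdef rGamma_inverse_Gamma field_simps add_ac)
  qed
  show ?thesis
    unfolding frac_int_def I sum_distrib_left
    by (intro sum.cong refl) (simp add: ratio[symmetric])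
qed

lemma poly_eq_sum_shifted_powers:
  fixes r :: "real poly"
  assumes "degree r \<le> B"
  shows "poly r y = (\<Sum>p\<le>B. coeff (pcompose r [:-1, 1:]) p * (1 + y) ^ p)"
proof -
  have "poly r y = poly (pcompose r [:-1, 1:]) (1 + y)" by (simp add: poly_pcompose)
  also have "\<dots> = (\<Sum>p\<le>B. coeff (pcompose r [:-1, 1:]) p * (1 + y) ^ p)"
    unfolding poly_altdef using assms
    by (intro sum.mono_neutral_left) (auto simp: degree_pcompose intro: coeff_eq_0)
  finally show ?thesis .
qed

lemma higher_deriv_poly: "(deriv ^^ k) (poly (q :: real poly)) = poly ((pderiv ^^ k) q)"
proof (induction k)
  case (Suc k)
  have "deriv (poly p) = poly (pderiv p)" for p :: "real poly"
    by (auto simp: fun_eq_iff intro: DERIV_imp_deriv poly_DERIV)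
  then show ?case by (simp add: Suc)
qed simp

lemma caputo_poly:
  assumes x: "x > -1" and k: "real k - 1 < \<mu>" "\<mu> < real k" and deg: "degree q \<le> B"
  shows "caputo \<mu> (poly q) x =
    (\<Sum>p\<le>B. coeff (pcompose ((pderiv ^^ k) q) [:-1, 1:]) p
        * (Gamma (real p + 1) / Gamma (real p + 1 + (real k - \<mu>))) * (1 + x) powr (real p + (real k - \<mu>)))"
proof -
  have kk: "nat \<lceil>\<mu>\<rceil> = k" using k by linarith
  have "degree ((pderiv ^^ k) q) \<le> B" using deg by (simp add: degree_higher_pderiv)
  then show ?thesis
    unfolding caputo_def Let_def kk higher_deriv_poly
    by (intro frac_int_sum_power[OF x]) (use k poly_eq_sum_shifted_powers in auto)
qed

lemma Gamma_of_nat_plus_1: "Gamma (real p + 1) = fact p"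
  using Gamma_fact[of p] by (simp add: add.commute)

lemma jacobi_coeff_plus_legendre_Gamma:
  assumes r: "\<rho> > 0"
  shows "jacobi_coeff_plus 0 0 l p * (Gamma (real p + 1) / Gamma (real p + 1 + \<rho>)) =
         fact l / Gamma (real l + 1 + \<rho>) * jacobi_coeff_plus (- \<rho>) \<rho> l p"
proof -
  define PP where "PP = pochhammer (- real l) p * pochhammer (real l + 1) p"
  have L: "jacobi_coeff_plus 0 0 l p = (-1) ^ l * PP / (fact p * fact p)"
    unfolding jacobi_coeff_plus_def PP_def using Gamma_of_nat_plus_1[of l]
    by (simp add: pochhammer_fact[symmetric] add_ac)
  have R: "jacobi_coeff_plus (- \<rho>) \<rho> l p = (-1) ^ l * Gamma (real l + 1 + \<rho>)
      / (fact l * Gamma (\<rho> + 1)) * (PP / (pochhammer (\<rho> + 1) p * fact p))"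
    unfolding jacobi_coeff_plus_def PP_def by (simp add: add_ac)
  have G: "Gamma (real p + 1 + \<rho>) = pochhammer (\<rho> + 1) p * Gamma (\<rho> + 1)"
    using Gamma_shift_eq_pochhammer_mult[of \<rho> p] r by (simp add: add_ac)
  have "Gamma (\<rho> + 1) > 0" "Gamma (real l + 1 + \<rho>) > 0" "pochhammer (\<rho> + 1) p > 0"
    using r by (auto intro: pochhammer_pos)
  then show ?thesis unfolding L R G Gamma_of_nat_plus_1 by (simp add: field_simps)
qed

lemma frac_int_legendre:
  assumes x: "x > -1" and r: "\<rho> > 0" "\<rho> < 1"
  shows "frac_int \<rho> (legendre l) x =
    fact l / Gamma (real l + 1 + \<rho>) * (1 + x) powr \<rho> * jacobi (- \<rho>) \<rho> l x"
proof -
  have "legendre l y = (\<Sum>p\<le>l. (jacobi_coeff_plus 0 0 l p / 2 ^ p) * (1 + y) ^ p)" for y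
    unfolding legendre_def jacobi_eq_sum_plus[of 0 0, simplified] by (simp add: power_divide)
  then have "frac_int \<rho> (legendre l) x = (\<Sum>p\<le>l. jacobi_coeff_plus 0 0 l p / 2 ^ p
      * (Gamma (real p + 1) / Gamma (real p + 1 + \<rho>)) * (1 + x) powr (real p + \<rho>))"
    by (rule frac_int_sum_power[OF x r(1)])
  also have "\<dots> = (\<Sum>p\<le>l. fact l / Gamma (real l + 1 + \<rho>) * (1 + x) powr \<rho>
      * (jacobi_coeff_plus (- \<rho>) \<rho> l p * ((1 + x) / 2) ^ p))"
  proof (intro sum.cong refl)
    fix p
    have "(1 + x) powr (real p + \<rho>) = (1 + x) ^ p * (1 + x) powr \<rho>"
      using x by (simp add: powr_add powr_realpow)
    then have "jacobi_coeff_plus 0 0 l p / 2 ^ p * (Gamma (real p + 1) / Gamma (real p + 1 + \<rho>))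
        * (1 + x) powr (real p + \<rho>) = (jacobi_coeff_plus 0 0 l p * (Gamma (real p + 1)
        / Gamma (real p + 1 + \<rho>))) * ((1 + x) ^ p * (1 + x) powr \<rho> / 2 ^ p)"
      by simp
    also have "\<dots> = fact l / Gamma (real l + 1 + \<rho>) * (1 + x) powr \<rho>
        * (jacobi_coeff_plus (- \<rho>) \<rho> l p * ((1 + x) / 2) ^ p)"
      unfolding jacobi_coeff_plus_legendre_Gamma[OF r(1)] by (simp add: power_divide)
    finally show "jacobi_coeff_plus 0 0 l p / 2 ^ p * (Gamma (real p + 1) / Gamma (real p + 1 + \<rho>))
        * (1 + x) powr (real p + \<rho>) = fact l / Gamma (real l + 1 + \<rho>) * (1 + x) powr \<rho>
        * (jacobi_coeff_plus (- \<rho>) \<rho> l p * ((1 + x) / 2) ^ p)" .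
  qed
  also have "\<dots> = fact l / Gamma (real l + 1 + \<rho>) * (1 + x) powr \<rho> * jacobi (- \<rho>) \<rho> l x"
    using r by (simp add: sum_distrib_left jacobi_eq_sum_plus)
  finally show ?thesis .
qed

definition antideriv :: "real poly \<Rightarrow> real poly" where
  "antideriv p = (\<Sum>i\<le>degree p. monom (coeff p i / real (Suc i)) (Suc i))"

lemma pderiv_antideriv: "pderiv (antideriv p) = p"
proof -
  have "pderiv (antideriv p) = (\<Sum>i\<le>degree p. monom (coeff p i) i)"
    unfolding antideriv_def higher_pderiv_sum[of 1, simplified]
    by (intro sum.cong refl) (simp add: pderiv_monom)
  also have "\<dots> = p" by (rule poly_as_sum_of_monoms)
  finally show ?thesis .
qed

lemma degree_antideriv: "degree (antideriv p) \<le> degree p + 1"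
  unfolding antideriv_def by (rule degree_sum_le) (auto intro: order_trans[OF degree_monom_le])

lemma has_integral_poly:
  assumes "a \<le> b"
  shows "(poly p has_integral (poly (antideriv p) b - poly (antideriv p) a)) {a..b}"
proof (rule fundamental_theorem_of_calculus[OF assms])
  fix x
  have "(poly (antideriv p) has_real_derivative poly p x) (at x within {a..b})"
    by (rule DERIV_subset[OF poly_DERIV[of "antideriv p", unfolded pderiv_antideriv]]) simp
  then show "(poly (antideriv p) has_vector_derivative poly p x) (at x within {a..b})"
    by (simp add: has_real_derivative_iff_has_vector_derivative)
qed

lemma poly_integrable_on: "poly p integrable_on {a..b::real}"
  using has_integral_poly[of a b p] by (cases "a \<le> b") (auto simp: integrable_on_def)

definition primitive :: "real poly \<Rightarrow> real poly" where
  "primitive p = antideriv p - [:poly (antideriv p) (-1):]"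

lemma pderiv_primitive: "pderiv (primitive p) = p"
  unfolding primitive_def by (simp add: pderiv_diff pderiv_antideriv pderiv_pCons)

lemma poly_primitive_minus_one: "poly (primitive p) (-1) = 0"
  unfolding primitive_def by simp

lemma poly_primitive_eq_integral: "x \<ge> -1 \<Longrightarrow> poly (primitive p) x = integral {-1..x} (poly p)"
  unfolding primitive_def using has_integral_poly[of "-1" x p] by (simp add: integral_unique)

lemma degree_primitive: "degree (primitive p) \<le> degree p + 1"
  unfolding primitive_def by (intro degree_diff_le degree_antideriv) auto

lemma frac_int_poly_sum:
  assumes x: "x > -1" and r: "\<rho> > 0" and fin: "finite L"
  shows "frac_int \<rho> (poly (\<Sum>l\<in>L. smult (c l) (q l))) x = (\<Sum>l\<in>L. c l * frac_int \<rho> (poly (q l)) x)"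
proof -
  have int: "(\<lambda>y. (x - y) powr (\<rho> - 1) * poly p y) integrable_on {-1..x}" for p
  proof -
    have "(\<lambda>y. \<Sum>i\<le>degree p. coeff (pcompose p [:-1, 1:]) i * ((x - y) powr (\<rho> - 1) * (1 + y) ^ i))
        integrable_on {-1..x}"
      by (intro integrable_sum integrable_on_mult_right has_integral_integrable[OF has_integral_frac_power[OF x r]])
        simp
    then show ?thesis
      unfolding poly_eq_sum_shifted_powers[OF order.refl, of p] by (simp add: sum_distrib_left mult_ac)
  qed
  have "integral {-1..x} (\<lambda>y. (x - y) powr (\<rho> - 1) * poly (\<Sum>l\<in>L. smult (c l) (q l)) y)
      = integral {-1..x} (\<lambda>y. \<Sum>l\<in>L. c l * ((x - y) powr (\<rho> - 1) * poly (q l) y))"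
    by (simp add: poly_sum sum_distrib_left mult_ac)
  also have "\<dots> = (\<Sum>l\<in>L. c l * integral {-1..x} (\<lambda>y. (x - y) powr (\<rho> - 1) * poly (q l) y))"
    using int by (simp add: integral_sum[OF fin] integrable_on_mult_right)
  finally show ?thesis unfolding frac_int_def by (simp add: sum_distrib_left mult_ac)
qed

lemma caputo_sum_legendre_primitives:
  assumes x: "x > -1" and k: "real k - 1 < \<mu>" "\<mu> < real k" and fin: "finite L"
    and B: "\<And>l. l \<in> L \<Longrightarrow> (pderiv ^^ k) (B l) = jacobi_poly 0 0 l"
  shows "caputo \<mu> (poly (\<Sum>l\<in>L. smult (c l) (B l))) x =
     (\<Sum>l\<in>L. c l * (fact l / Gamma (real l + 1 + (real k - \<mu>)) * (1 + x) powr (real k - \<mu>)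
       * jacobi (\<mu> - real k) (real k - \<mu>) l x))"
proof -
  have "nat \<lceil>\<mu>\<rceil> = k" using k by linarith
  then have "caputo \<mu> (poly (\<Sum>l\<in>L. smult (c l) (B l))) x =
      frac_int (real k - \<mu>) (poly (\<Sum>l\<in>L. smult (c l) (jacobi_poly 0 0 l))) x"
    unfolding caputo_def Let_def higher_deriv_poly higher_pderiv_sum higher_pderiv_smult
    by (simp add: B)
  also have "\<dots> = (\<Sum>l\<in>L. c l * frac_int (real k - \<mu>) (legendre l) x)"
    unfolding legendre_def jacobi_eq_poly using k by (intro frac_int_poly_sum[OF x _ fin]) auto
  also have "\<dots> = (\<Sum>l\<in>L. c l * (fact l / Gamma (real l + 1 + (real k - \<mu>)) * (1 + x) powr (real k - \<mu>)
       * jacobi (\<mu> - real k) (real k - \<mu>) l x))"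
    using frac_int_legendre[OF x, of "real k - \<mu>"] k by simp
  finally show ?thesis .
qed

lemma caputo_diff:
  assumes x: "x > -1" and k: "real k - 1 < \<mu>" "\<mu> < real k"
  shows "caputo \<mu> (poly (p - q)) x = caputo \<mu> (poly p) x - caputo \<mu> (poly q) x"
proof -
  define B where "B = max (degree p) (degree q)"
  have dp: "degree p \<le> B" and dq: "degree q \<le> B" and dpq: "degree (p - q) \<le> B"
    unfolding B_def by (auto intro: degree_diff_le)
  have diff: "(pderiv ^^ k) (p - q) = (pderiv ^^ k) p - (pderiv ^^ k) q"
    using higher_pderiv_add[of k "p - q" q] by simp
  show ?thesis
    unfolding caputo_poly[OF x k dp] caputo_poly[OF x k dq] caputo_poly[OF x k dpq] diff
    by (simp add: pcompose_diff sum_subtractf[symmetric] algebra_simps)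
qed

lemma card_le_degree_if_roots:
  fixes p :: "'a::idom poly"
  assumes "p \<noteq> 0" and "\<forall>z\<in>Z. poly p z = 0"
  shows "card Z \<le> degree p"
proof -
  have "card Z \<le> card {x. poly p x = 0}"
    using assms by (intro card_mono poly_roots_finite) auto
  also have "\<dots> \<le> degree p" by (rule card_poly_roots_bound[OF assms(1)])
  finally show ?thesis .
qed

lemma poly_eq_0_if_higher_pderiv_eq_0:
  fixes d :: "real poly"
  assumes "(pderiv ^^ k) d = 0" and "card Z = k" and "\<forall>z\<in>Z. poly d z = 0"
  shows "d = 0"
proof (rule ccontr)
  assume d: "d \<noteq> 0"
  have "degree d < k"
  proof (rule ccontr)
    assume "\<not> degree d < k"
    then have "coeff ((pderiv ^^ k) d) (degree d - k) = pochhammer (real (Suc (degree d - k))) k * lead_coeff d"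
      by (simp add: coeff_higher_pderiv)
    moreover have "pochhammer (real (Suc (degree d - k))) k > 0" by (intro pochhammer_pos) simp
    ultimately show False using assms(1) d by simp
  qed
  then show False using card_le_degree_if_roots[OF d assms(3)] assms(2) by simp
qed

definition caputo_factor :: "nat \<Rightarrow> real \<Rightarrow> real poly \<Rightarrow> real poly" where
  "caputo_factor k \<mu> d = (\<Sum>p\<le>degree d. monom (coeff (pcompose ((pderiv ^^ k) d) [:-1, 1:]) p
     * (Gamma (real p + 1) / Gamma (real p + 1 + (real k - \<mu>)))) p)"

lemma caputo_eq_caputo_factor:
  assumes x: "x > -1" and k: "real k - 1 < \<mu>" "\<mu> < real k"
  shows "caputo \<mu> (poly d) x = (1 + x) powr (real k - \<mu>) * poly (caputo_factor k \<mu> d) (1 + x)"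
  unfolding caputo_poly[OF x k order.refl] caputo_factor_def poly_sum poly_monom sum_distrib_left
  using x by (intro sum.cong refl) (simp add: powr_add powr_realpow mult_ac)

lemma degree_caputo_factor: "degree (caputo_factor k \<mu> d) \<le> degree d - k"
proof (rule degree_le, intro allI impI)
  fix p assume "degree d - k < p"
  then have "coeff (pcompose ((pderiv ^^ k) d) [:-1, 1:]) p = 0"
    by (intro coeff_eq_0) (simp add: degree_pcompose degree_higher_pderiv)
  then show "coeff (caputo_factor k \<mu> d) p = 0"
    unfolding caputo_factor_def by (simp add: coeff_sum)
qed

lemma higher_pderiv_eq_0_if_caputo_factor_eq_0:
  assumes k: "real k - 1 < \<mu>" "\<mu> < real k" and "caputo_factor k \<mu> d = 0"
  shows "(pderiv ^^ k) d = 0"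
proof -
  have "coeff (pcompose ((pderiv ^^ k) d) [:-1, 1:]) p = 0" for p
  proof (cases "p \<le> degree d")
    case True
    have "Gamma (real p + 1 + (real k - \<mu>)) > 0" using k by auto
    moreover have "coeff (caputo_factor k \<mu> d) p = 0" using assms(3) by simp
    ultimately show ?thesis using True unfolding caputo_factor_def by (simp add: coeff_sum Gamma_of_nat_plus_1)
  next
    case False
    then show ?thesis by (intro coeff_eq_0) (simp add: degree_pcompose degree_higher_pderiv)
  qed
  then have "pcompose ((pderiv ^^ k) d) [:-1, 1:] = 0" by (intro poly_eqI) simp
  then show ?thesis by (simp add: pcompose_eq_0)
qed

lemma caputo_birkhoff_unisolvent:
  assumes k: "real k - 1 < \<mu>" "\<mu> < real k" and kN: "k \<le> N" and deg: "degree d \<le> N"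
    and X: "card X = N + 1 - k" "\<forall>x\<in>X. x > -1 \<and> caputo \<mu> (poly d) x = 0"
    and Z: "card Z = k" "\<forall>z\<in>Z. poly d z = 0"
  shows "d = 0"
proof (rule poly_eq_0_if_higher_pderiv_eq_0[OF _ Z], rule higher_pderiv_eq_0_if_caputo_factor_eq_0[OF k])
  show "caputo_factor k \<mu> d = 0"
  proof (rule ccontr)
    assume R: "caputo_factor k \<mu> d \<noteq> 0"
    have "\<forall>y\<in>(\<lambda>x. 1 + x) ` X. poly (caputo_factor k \<mu> d) y = 0"
      using X(2) by (auto simp: caputo_eq_caputo_factor[OF _ k])
    from card_le_degree_if_roots[OF R this]
    have "card ((\<lambda>x. 1 + x) ` X) \<le> degree d - k" using degree_caputo_factor[of k \<mu> d] by linarith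
    moreover have "card ((\<lambda>x. 1 + x) ` X) = card X" by (intro card_image) (auto intro: inj_onI)
    ultimately show False using X(1) deg kN by linarith
  qed
qed

lemma JGL_node_less:
  assumes "JGL al be N xs w" and "i < k" and "k \<le> N"
  shows "xs i < xs k"
  using assms unfolding JGL_def strict_mono_on_def by auto

lemma JGL_node_inj_on:
  assumes "JGL al be N xs w" and "I \<subseteq> {0..N}"
  shows "inj_on xs I"
  using JGL_node_less[OF assms(1)] assms(2) by (intro inj_onI) (metis atLeastAtMost_iff less_irrefl
    linorder_neqE_nat subsetD)

lemma JGL_node_gt_minus_one:
  assumes "JGL al be N xs w" and "1 \<le> i" and "i \<le> N"
  shows "xs i > -1"
  using JGL_node_less[OF assms(1), of 0 i] assms unfolding JGL_def by auto

lemma JGL_interior_node_less_one: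
  assumes "JGL al be N xs w" and "i < N"
  shows "xs i < 1"
  using JGL_node_less[OF assms(1), of i N] assms unfolding JGL_def by auto

lemma JGL_interior_node_root:
  assumes jgl: "JGL al be N xs w" and i: "1 \<le> i" "i < N"
  shows "poly (pderiv (jacobi_poly al be N)) (xs i) = 0"
proof -
  have "(1 - (xs i)\<^sup>2) * deriv (jacobi al be N) (xs i) = 0"
    using jgl i unfolding JGL_def by auto
  moreover have "deriv (jacobi al be N) = poly (pderiv (jacobi_poly al be N))"
    using higher_deriv_poly[of 1 "jacobi_poly al be N"] by (simp add: jacobi_eq_poly)
  moreover have "(xs i)\<^sup>2 < 1"
    using JGL_node_gt_minus_one[OF jgl, of i] JGL_interior_node_less_one[OF jgl, of i] i
    by (simp add: abs_square_less_1)
  ultimately show ?thesis by simp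
qed

lemma jacobi_poly_ode_minus_one:
  assumes "al > -1"
  shows "2 * (be + 1) * poly (pderiv (jacobi_poly al be N)) (-1)
    = - (real N * (real N + al + be + 1)) * poly (jacobi_poly al be N) (-1)"
  using jacobi_poly_ode[OF assms, of "-1" be N] by (simp add: algebra_simps)

lemma jacobi_poly_ode_one:
  assumes "al > -1"
  shows "2 * (al + 1) * poly (pderiv (jacobi_poly al be N)) 1
    = real N * (real N + al + be + 1) * poly (jacobi_poly al be N) 1"
  using jacobi_poly_ode[OF assms, of 1 be N] by (simp add: algebra_simps)

lemma jacobi_poly_ode_critical:
  assumes "al > -1" and "poly (pderiv (jacobi_poly al be N)) x = 0"
  shows "(1 - x\<^sup>2) * poly (pderiv (pderiv (jacobi_poly al be N))) x
    = - (real N * (real N + al + be + 1)) * poly (jacobi_poly al be N) x"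
  using jacobi_poly_ode[OF assms(1), of x be N] assms(2) by (simp add: algebra_simps)

lemma lagrange_basis_poly:
  fixes h :: "real poly"
  assumes h: "h \<noteq> 0" and R: "card R = degree h" "\<forall>s\<in>R. poly h s = 0" and r: "r \<in> R"
  obtains p where "degree p = degree h - 1" "poly p r = 1" "\<forall>s\<in>R - {r}. poly p s = 0"
    "poly (pderiv h) r \<noteq> 0" "\<And>y. y \<noteq> r \<Longrightarrow> poly p y = poly h y / ((y - r) * poly (pderiv h) r)"
proof -
  have "[:-r, 1:] dvd h" using R(2) r by (simp add: poly_eq_0_iff_dvd)
  then obtain g where g: "h = [:-r, 1:] * g" by (elim dvdE)
  have g0: "g \<noteq> 0" using g h by auto
  have dg: "degree h = degree g + 1" unfolding g by (subst degree_mult_eq) (use g0 in auto)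
  have roots: "\<forall>s\<in>R - {r}. poly g s = 0" using R(2) g by auto
  have h'r: "poly (pderiv h) r = poly g r" unfolding g pderiv_mult by (simp add: pderiv_pCons)
  have "poly g r \<noteq> 0"
  proof
    assume "poly g r = 0"
    then have "card R \<le> degree g" using card_le_degree_if_roots[OF g0] roots by blast
    then show False using R(1) dg by linarith
  qed
  moreover have "poly g y / poly g r = poly h y / ((y - r) * poly (pderiv h) r)" if "y \<noteq> r" for y
  proof -
    have "poly h y = (y - r) * poly g y" unfolding g by (simp add: algebra_simps)
    then show ?thesis using that unfolding h'r by simp
  qed
  ultimately show ?thesis
    using that[of "smult (1 / poly g r) g"] dg roots h'r by auto
qed

lemma card_JGL_nodes:
  assumes "JGL al be N xs w" and "I \<subseteq> {0..N}"
  shows "card (xs ` I) = card I"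
  using card_image[OF JGL_node_inj_on[OF assms]] .

lemma JGL_right_node_root:
  assumes jgl: "JGL al be N xs w" and i: "1 \<le> i" "i \<le> N"
  shows "poly ([:1, -1:] * pderiv (jacobi_poly al be N)) (xs i) = 0"
proof (cases "i = N")
  case True
  then show ?thesis using jgl unfolding JGL_def by simp
next
  case False
  then show ?thesis using i JGL_interior_node_root[OF jgl, of i] by simp
qed

lemma JGL_right_node_pderiv:
  assumes jgl: "JGL al be N xs w" and al: "al > -1" and j: "1 \<le> j" "j \<le> N"
  shows "(if j = N then al + 1 else 1) * (1 + xs j)
      * poly (pderiv ([:1, -1:] * pderiv (jacobi_poly al be N))) (xs j)
    = - (real N * (real N + al + be + 1)) * poly (jacobi_poly al be N) (xs j)"
proof -
  let ?P = "jacobi_poly al be N"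
  have h': "poly (pderiv ([:1, -1:] * pderiv ?P)) y = (1 - y) * poly (pderiv (pderiv ?P)) y - poly (pderiv ?P) y"
    for y unfolding pderiv_mult by (simp add: pderiv_pCons algebra_simps)
  show ?thesis
  proof (cases "j = N")
    case True
    then have "xs j = 1" using jgl unfolding JGL_def by simp
    then show ?thesis
      using True jacobi_poly_ode_one[OF al, of be N] unfolding h' by (simp add: algebra_simps)
  next
    case False
    then have "poly (pderiv ?P) (xs j) = 0" using JGL_interior_node_root[OF jgl] j by simp
    then show ?thesis
      using False jacobi_poly_ode_critical[OF al, of be N "xs j"] unfolding h'
      by (simp add: power2_eq_square algebra_simps)
  qed
qed

text \<open>Lagrange basis at the nodes \<open>x_1, ..., x_N\<close>, the roots of \<open>(1 - x) P_N'(x)\<close>;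
  its value at \<open>-1\<close> comes from the Jacobi differential equation.\<close>
lemma JGL_lagrange_basis_right:
  assumes jgl: "JGL al be N xs w" and N: "N \<ge> 2" and al: "al > -1" and be: "be > -1"
    and j: "j \<in> {1..N}"
  obtains p where "degree p \<le> N - 1" "\<forall>i\<in>{1..N}. poly p (xs i) = (if i = j then 1 else 0)"
    "poly p (-1) = - (if j = N then al + 1 else 1) / (be + 1)
       * jacobi al be N (-1) / jacobi al be N (xs j)"
proof -
  define P where "P = jacobi_poly al be N"
  define h where "h = [:1, -1:] * pderiv P"
  define lam where "lam = real N * (real N + al + be + 1)"
  define c where "c = (if j = N then al + 1 else 1)"
  have lam: "lam > 0" unfolding lam_def using N al be by simp
  have dP: "pderiv P \<noteq> 0" "degree (pderiv P) = N - 1"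
    using N unfolding P_def by (simp_all add: pderiv_eq_0_iff degree_pderiv degree_jacobi_poly[OF al be])
  have h0: "h \<noteq> 0" unfolding h_def using dP by (simp only: mult_eq_0_iff) simp
  have dh: "degree h = N" unfolding h_def using dP N by (subst degree_mult_eq) auto
  have "card (xs ` {1..N}) = degree h" using card_JGL_nodes[OF jgl, of "{1..N}"] dh by simp
  moreover have "\<forall>s\<in>xs ` {1..N}. poly h s = 0"
    using JGL_right_node_root[OF jgl] unfolding h_def P_def by auto
  ultimately obtain p where p: "degree p = degree h - 1" "poly p (xs j) = 1"
    "\<forall>s\<in>xs ` {1..N} - {xs j}. poly p s = 0" "poly (pderiv h) (xs j) \<noteq> 0"
    "\<And>y. y \<noteq> xs j \<Longrightarrow> poly p y = poly h y / ((y - xs j) * poly (pderiv h) (xs j))"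
    using lagrange_basis_poly[OF h0] j by blast
  have xj: "xs j > -1" using JGL_node_gt_minus_one[OF jgl] j by simp
  have key: "c * (1 + xs j) * poly (pderiv h) (xs j) = - lam * poly P (xs j)"
    using JGL_right_node_pderiv[OF jgl al, of j] j unfolding c_def h_def lam_def P_def by simp
  have "c > 0" unfolding c_def using al by simp
  then have PNxj: "poly P (xs j) \<noteq> 0" using key p(4) xj lam by auto
  have hj: "(-1 - xs j) * poly (pderiv h) (xs j) = lam * poly P (xs j) / c"
    using key \<open>c > 0\<close> by (simp add: field_simps)
  have hm1: "poly h (-1) = - lam * poly P (-1) / (be + 1)"
    using jacobi_poly_ode_minus_one[OF al, of be N] be unfolding h_def lam_def P_def
    by (simp add: field_simps)
  have "poly p (-1) = poly h (-1) / ((-1 - xs j) * poly (pderiv h) (xs j))"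
    using p(5) xj by simp
  also have "\<dots> = - c / (be + 1) * poly P (-1) / poly P (xs j)"
    unfolding hm1 hj using PNxj lam \<open>c > 0\<close> by simp
  finally have "poly p (-1) = - c / (be + 1) * poly P (-1) / poly P (xs j)" .
  moreover have "\<forall>i\<in>{1..N}. poly p (xs i) = (if i = j then 1 else 0)"
    using p(2,3) JGL_node_inj_on[OF jgl, of "{1..N}"] j by (auto simp: inj_on_eq_iff)
  ultimately show ?thesis
    using that[of p] p(1) dh unfolding c_def P_def poly_jacobi_poly by simp
qed

lemma JGL_interior_node_pderiv2:
  assumes jgl: "JGL al be N xs w" and al: "al > -1" and j: "1 \<le> j" "j < N"
  shows "(1 + xs j) * (1 - xs j) * poly (pderiv (pderiv (jacobi_poly al be N))) (xs j)
    = - (real N * (real N + al + be + 1)) * poly (jacobi_poly al be N) (xs j)"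
  using jacobi_poly_ode_critical[OF al JGL_interior_node_root[OF jgl j]]
  by (simp add: power2_eq_square algebra_simps)

lemma JGL_lagrange_basis_interior:
  assumes jgl: "JGL al be N xs w" and N: "N \<ge> 2" and al: "al > -1" and be: "be > -1"
    and j: "j \<in> {1..N-1}"
  obtains p where "degree p \<le> N - 2" "\<forall>i\<in>{1..N-1}. poly p (xs i) = (if i = j then 1 else 0)"
    "poly p (-1) = (xs j - 1) * jacobi al be N (-1) / (2 * (be + 1) * jacobi al be N (xs j))"
    "poly p 1 = - ((1 + xs j) * jacobi al be N 1 / (2 * (al + 1) * jacobi al be N (xs j)))"
proof -
  define P where "P = jacobi_poly al be N"
  define h where "h = pderiv P"
  define lam where "lam = real N * (real N + al + be + 1)"
  have lam: "lam > 0" unfolding lam_def using N al be by simp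
  have h0: "h \<noteq> 0" and dh: "degree h = N - 1"
    using N unfolding h_def P_def by (simp_all add: pderiv_eq_0_iff degree_pderiv degree_jacobi_poly[OF al be])
  have "card (xs ` {1..N-1}) = degree h" using card_JGL_nodes[OF jgl, of "{1..N-1}"] dh by simp
  moreover have "\<forall>s\<in>xs ` {1..N-1}. poly h s = 0"
    using JGL_interior_node_root[OF jgl] unfolding h_def P_def by auto
  ultimately obtain p where p: "degree p = degree h - 1" "poly p (xs j) = 1"
    "\<forall>s\<in>xs ` {1..N-1} - {xs j}. poly p s = 0" "poly (pderiv h) (xs j) \<noteq> 0"
    "\<And>y. y \<noteq> xs j \<Longrightarrow> poly p y = poly h y / ((y - xs j) * poly (pderiv h) (xs j))"
    using lagrange_basis_poly[OF h0] j by blast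
  define u where "u = 1 + xs j"
  define v where "v = 1 - xs j"
  define a where "a = al + 1"
  define b where "b = be + 1"
  have "j < N" using j N by auto
  then have uv: "u > 0" "v > 0"
    using JGL_node_gt_minus_one[OF jgl, of j] JGL_interior_node_less_one[OF jgl, of j] j
    unfolding u_def v_def by auto
  have ab: "a > 0" "b > 0" unfolding a_def b_def using al be by auto
  have hj: "poly (pderiv h) (xs j) = - lam * poly P (xs j) / (u * v)"
    using JGL_interior_node_pderiv2[OF jgl al, of j] j \<open>j < N\<close> uv
    unfolding h_def P_def lam_def u_def[symmetric] v_def[symmetric] by (simp add: field_simps)
  then have PNxj: "poly P (xs j) \<noteq> 0" using p(4) by auto
  have hm1: "poly h (-1) = - lam * poly P (-1) / (2 * b)"
    using jacobi_poly_ode_minus_one[OF al, of be N] ab unfolding h_def lam_def P_def b_def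
    by (simp add: field_simps)
  have hp1: "poly h 1 = lam * poly P 1 / (2 * a)"
    using jacobi_poly_ode_one[OF al, of be N] ab unfolding h_def lam_def P_def a_def
    by (simp add: field_simps)
  have xj: "-1 - xs j = - u" "1 - xs j = v" "xs j - 1 = - v" "1 + xs j = u"
    unfolding u_def v_def by simp_all
  have "poly p (-1) = poly h (-1) / ((-1 - xs j) * poly (pderiv h) (xs j))"
    using p(5)[of "-1"] uv unfolding u_def by simp
  also have "\<dots> = (xs j - 1) * poly P (-1) / (2 * (be + 1) * poly P (xs j))"
    unfolding hm1 hj xj b_def[symmetric] using uv lam PNxj ab by (simp add: field_simps)
  finally have "poly p (-1) = (xs j - 1) * poly P (-1) / (2 * (be + 1) * poly P (xs j))" .
  moreover have "poly p 1 = - ((1 + xs j) * poly P 1 / (2 * (al + 1) * poly P (xs j)))"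
  proof -
    have "poly p 1 = poly h 1 / ((1 - xs j) * poly (pderiv h) (xs j))"
      using p(5)[of 1] uv unfolding v_def by simp
    also have "\<dots> = - ((1 + xs j) * poly P 1 / (2 * (al + 1) * poly P (xs j)))"
      unfolding hp1 hj xj a_def[symmetric] using uv lam PNxj ab by (simp add: field_simps)
    finally show ?thesis .
  qed
  moreover have "\<forall>i\<in>{1..N-1}. poly p (xs i) = (if i = j then 1 else 0)"
    using p(2,3) JGL_node_inj_on[OF jgl, of "{1..N-1}"] j by (auto simp: inj_on_eq_iff)
  ultimately show ?thesis
    using that[of p] p(1) dh unfolding P_def poly_jacobi_poly by simp
qed

lemma quad_sum_mult_cardinal:
  assumes J: "J \<subseteq> {..N}" "j \<in> J" and p: "\<forall>i\<in>J. poly p (xs i) = (if i = j then 1 else 0)"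
  shows "quad_sum N xs w (p * q) =
    (\<Sum>i\<in>{..N} - J. poly p (xs i) * poly q (xs i) * w i) + poly q (xs j) * w j"
proof -
  have "quad_sum N xs w (p * q) =
      (\<Sum>i\<in>{..N} - J. poly p (xs i) * poly q (xs i) * w i) + (\<Sum>i\<in>J. poly p (xs i) * poly q (xs i) * w i)"
    unfolding quad_sum_def using J by (simp add: sum.subset_diff[of J] mult_ac)
  also have "(\<Sum>i\<in>J. poly p (xs i) * poly q (xs i) * w i) = (\<Sum>i\<in>J. if i = j then poly q (xs j) * w j else 0)"
    using p by (intro sum.cong) auto
  finally show ?thesis using J finite_subset[OF J(1)] by simp
qed

text \<open>Expand \<open>p\<close> in Jacobi polynomials by quadrature, convert to the basis
  \<open>P_l^(\<mu>-k,k-\<mu>)\<close> and replace each \<open>P_l^(\<mu>-k,k-\<mu>)\<close> by a \<open>k\<close>-fold antiderivative \<open>B l\<close> of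
  \<open>P_l\<close>; by Bateman's formula the Caputo derivative of the result is \<open>((1 + x) / (1 + y))^(k-\<mu>) p(x)\<close>.\<close>
lemma caputo_discrete_jacobi_synthesis:
  assumes jgl: "JGL al be N xs w" and al: "al > -1" and be: "be > -1"
    and k: "real k - 1 < \<mu>" "\<mu> < real k" and M: "M < N" and deg: "degree p \<le> M"
    and B: "\<And>l. l \<le> M \<Longrightarrow> (pderiv ^^ k) (B l) = jacobi_poly 0 0 l"
    and x: "x > -1"
  shows "caputo \<mu> (poly (\<Sum>l\<le>M. smult (1 / (1 + y) powr (real k - \<mu>)
      * (Gamma (real l + 1 + (real k - \<mu>)) / fact l
      * (\<Sum>n=l..M. conn_coeff al be (\<mu> - real k) (real k - \<mu>) l n
          * (quad_sum N xs w (p * jacobi_poly al be n) / jacobi_gamma al be n)))) (B l))) x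
    = (1 + x) powr (real k - \<mu>) / (1 + y) powr (real k - \<mu>) * poly p x"
proof -
  let ?\<xi> = "\<lambda>n. quad_sum N xs w (p * jacobi_poly al be n) / jacobi_gamma al be n"
  let ?C = "conn_coeff al be (\<mu> - real k) (real k - \<mu>)"
  have "\<mu> - real k > -1" "real k - \<mu> > -1" using k by auto
  note swap = sum_conn_coeff_swap[OF al be this]
  have cap: "caputo \<mu> (poly (\<Sum>l\<le>M. smult (c l) (B l))) x =
     (\<Sum>l\<le>M. c l * (fact l / Gamma (real l + 1 + (real k - \<mu>)) * (1 + x) powr (real k - \<mu>)
       * jacobi (\<mu> - real k) (real k - \<mu>) l x))" for c
    by (rule caputo_sum_legendre_primitives[OF x k finite_atMost]) (simp add: B)
  have "Gamma (real l + 1 + (real k - \<mu>)) \<noteq> 0" for l using k by (auto simp: Gamma_eq_zero_iff)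
  then have "caputo \<mu> (poly (\<Sum>l\<le>M. smult (1 / (1 + y) powr (real k - \<mu>)
      * (Gamma (real l + 1 + (real k - \<mu>)) / fact l * (\<Sum>n=l..M. ?C l n * ?\<xi> n))) (B l))) x
    = (1 + x) powr (real k - \<mu>) / (1 + y) powr (real k - \<mu>)
      * (\<Sum>l\<le>M. (\<Sum>n=l..M. ?C l n * ?\<xi> n) * jacobi (\<mu> - real k) (real k - \<mu>) l x)"
    unfolding cap sum_distrib_left[of "(1 + x) powr (real k - \<mu>) / (1 + y) powr (real k - \<mu>)"]
    by (intro sum.cong refl) (simp add: field_simps)
  also have "\<dots> = (1 + x) powr (real k - \<mu>) / (1 + y) powr (real k - \<mu>) * poly p x"
    unfolding swap jacobi_discrete_expansion[OF jgl al be M deg] ..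
  finally show ?thesis .
qed

lemma caputo_discrete_jacobi_synthesis_nodes:
  assumes jgl: "JGL al be N xs w" and al: "al > -1" and be: "be > -1"
    and k: "real k - 1 < \<mu>" "\<mu> < real k" and M: "M < N" and deg: "degree p \<le> M"
    and B: "\<And>l. l \<le> M \<Longrightarrow> (pderiv ^^ k) (B l) = jacobi_poly 0 0 l"
    and J: "J \<subseteq> {1..N}" "j \<in> J" and p: "\<forall>i\<in>J. poly p (xs i) = (if i = j then 1 else 0)"
    and i: "i \<in> J"
  shows "caputo \<mu> (poly (\<Sum>l\<le>M. smult (1 / (1 + xs j) powr (real k - \<mu>)
      * (Gamma (real l + 1 + (real k - \<mu>)) / fact l
      * (\<Sum>n=l..M. conn_coeff al be (\<mu> - real k) (real k - \<mu>) l n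
          * (quad_sum N xs w (p * jacobi_poly al be n) / jacobi_gamma al be n)))) (B l))) (xs i)
    = (if i = j then 1 else 0)"
proof -
  have "xs i > -1" using J i JGL_node_gt_minus_one[OF jgl] by auto
  then show ?thesis
    using caputo_discrete_jacobi_synthesis[OF jgl al be k M deg B] p i by auto
qed

lemma birkhoff1_unique:
  assumes jgl: "JGL al be N xs w" and N: "N \<ge> 2" and mu: "0 < \<mu>" "\<mu> < 1"
    and q1: "birkhoff1 \<mu> N xs j q1" and q2: "birkhoff1 \<mu> N xs j q2"
  shows "q1 = q2"
proof -
  have "q1 - q2 = 0"
  proof (rule caputo_birkhoff_unisolvent[where k = 1 and N = N and X = "xs ` {1..N}" and Z = "{-1}"])
    show "degree (q1 - q2) \<le> N" using q1 q2 unfolding birkhoff1_def by (auto intro: degree_diff_le)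
    show "card (xs ` {1..N}) = N + 1 - 1" using card_JGL_nodes[OF jgl, of "{1..N}"] by simp
    show "\<forall>x\<in>xs ` {1..N}. x > -1 \<and> caputo \<mu> (poly (q1 - q2)) x = 0"
    proof
      fix x assume "x \<in> xs ` {1..N}"
      then obtain i where i: "i \<in> {1..N}" "x = xs i" by blast
      then have x: "x > -1" using JGL_node_gt_minus_one[OF jgl, of i] by auto
      have k: "real 1 - 1 < \<mu>" "\<mu> < real 1" using mu by auto
      show "x > -1 \<and> caputo \<mu> (poly (q1 - q2)) x = 0"
        using caputo_diff[OF x k] x q1 q2 i unfolding birkhoff1_def by simp
    qed
    show "\<forall>z\<in>{-1}. poly (q1 - q2) z = 0" using q1 q2 unfolding birkhoff1_def by simp
  qed (use mu N in auto)
  then show ?thesis by simp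
qed

lemma birkhoff2_unique:
  assumes jgl: "JGL al be N xs w" and N: "N \<ge> 2" and mu: "1 < \<mu>" "\<mu> < 2"
    and q1: "birkhoff2 \<mu> N xs j q1" and q2: "birkhoff2 \<mu> N xs j q2"
  shows "q1 = q2"
proof -
  have "q1 - q2 = 0"
  proof (rule caputo_birkhoff_unisolvent[where k = 2 and N = N and X = "xs ` {1..N-1}" and Z = "{-1, 1}"])
    show "degree (q1 - q2) \<le> N" using q1 q2 unfolding birkhoff2_def by (auto intro: degree_diff_le)
    show "card (xs ` {1..N-1}) = N + 1 - 2" using card_JGL_nodes[OF jgl, of "{1..N-1}"] by simp
    show "\<forall>x\<in>xs ` {1..N-1}. x > -1 \<and> caputo \<mu> (poly (q1 - q2)) x = 0"
    proof
      fix x assume "x \<in> xs ` {1..N-1}"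
      then obtain i where i: "i \<in> {1..N-1}" "x = xs i" by blast
      then have x: "x > -1" using JGL_node_gt_minus_one[OF jgl, of i] by auto
      have k: "real 2 - 1 < \<mu>" "\<mu> < real 2" using mu by auto
      show "x > -1 \<and> caputo \<mu> (poly (q1 - q2)) x = 0"
        using caputo_diff[OF x k] x q1 q2 i unfolding birkhoff2_def by simp
    qed
    show "\<forall>z\<in>{-1, 1}. poly (q1 - q2) z = 0" using q1 q2 unfolding birkhoff2_def by simp
  qed (use mu N in auto)
  then show ?thesis by simp
qed

lemma birkhoff1_formula:
  fixes N :: nat and al be \<mu> :: real and xs w :: "nat \<Rightarrow> real"
  assumes N: "N \<ge> 2" and al: "al > -1" and be: "be > -1"
    and jgl: "JGL al be N xs w" and j: "j \<in> {1..N}" and mu: "0 < \<mu>" "\<mu> < 1"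
  defines "\<xi> \<equiv> \<lambda>n. 1 / jacobi_gamma al be n *
    (- (if j = N then al + 1 else 1) / (be + 1) * jacobi al be N (-1) / jacobi al be N (xs j)
       * jacobi al be n (-1) * w 0 + jacobi al be n (xs j) * w j)"
  shows "(\<exists>!q. birkhoff1 \<mu> N xs j q) \<and>
    (\<forall>q. birkhoff1 \<mu> N xs j q \<longrightarrow> (\<forall>x\<in>{-1..1}. poly q x = 1 / (1 + xs j) powr (1 - \<mu>) *
      (\<Sum>l\<le>N-1. Gamma (real l - \<mu> + 2) / fact l *
        (\<Sum>n=l..N-1. conn_coeff al be (\<mu> - 1) (1 - \<mu>) l n * \<xi> n) * integral {-1..x} (legendre l))))"
proof -
  obtain p where p: "degree p \<le> N - 1" "\<forall>i\<in>{1..N}. poly p (xs i) = (if i = j then 1 else 0)"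
     "poly p (-1) = - (if j = N then al + 1 else 1) / (be + 1) * jacobi al be N (-1) / jacobi al be N (xs j)"
    using JGL_lagrange_basis_right[OF jgl N al be j] by blast
  define c where "c l = 1 / (1 + xs j) powr (1 - \<mu>) * (Gamma (real l - \<mu> + 2) / fact l
    * (\<Sum>n=l..N-1. conn_coeff al be (\<mu> - 1) (1 - \<mu>) l n * \<xi> n))" for l
  define F where "F = (\<Sum>l\<le>N-1. smult (c l) (primitive (jacobi_poly 0 0 l)))"
  have "{..N} - {1..N} = {0}" by auto
  then have \<xi>: "\<xi> n = quad_sum N xs w (p * jacobi_poly al be n) / jacobi_gamma al be n" for n
    using quad_sum_mult_cardinal[of "{1..N}" N j p xs w "jacobi_poly al be n"] j p(2,3) jgl
    unfolding \<xi>_def JGL_def by (simp add: poly_jacobi_poly)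
  have bF: "birkhoff1 \<mu> N xs j F"
    unfolding birkhoff1_def
  proof (intro conjI ballI)
    show "degree F \<le> N" unfolding F_def using N
      by (intro degree_sum_le order.trans[OF degree_smult_le] order.trans[OF degree_primitive])
        (auto simp: degree_jacobi_poly)
    show "poly F (-1) = 0" unfolding F_def by (simp add: poly_sum poly_primitive_minus_one)
    fix i assume "i \<in> {1..N}"
    then show "caputo \<mu> (poly F) (xs i) = (if i = j then 1 else 0)"
      using caputo_discrete_jacobi_synthesis_nodes[OF jgl al be, of 1 \<mu> "N - 1" p
        "\<lambda>l. primitive (jacobi_poly 0 0 l)" "{1..N}" j i] mu N p(1,2) j
      unfolding F_def c_def \<xi> by (simp add: pderiv_primitive algebra_simps)
  qed
  have uniq: "q = F" if "birkhoff1 \<mu> N xs j q" for q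
    using birkhoff1_unique[OF jgl N mu that bF] .
  have poly_F: "poly F x = (\<Sum>l\<le>N-1. c l * integral {-1..x} (legendre l))" if "x \<in> {-1..1}" for x
    using that unfolding F_def legendre_def jacobi_eq_poly by (simp add: poly_sum poly_primitive_eq_integral)
  show ?thesis
  proof (intro conjI allI impI ballI)
    show "\<exists>!q. birkhoff1 \<mu> N xs j q" using bF uniq by blast
    fix q x assume "birkhoff1 \<mu> N xs j q" "x \<in> {-1..1::real}"
    then show "poly q x = 1 / (1 + xs j) powr (1 - \<mu>) *
           (\<Sum>l\<le>N-1. Gamma (real l - \<mu> + 2) / fact l *
              (\<Sum>n=l..N-1. conn_coeff al be (\<mu> - 1) (1 - \<mu>) l n * \<xi> n)
              * integral {-1..x} (legendre l))"
      using uniq poly_F unfolding c_def by (simp add: sum_distrib_left mult_ac)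
  qed
qed

text \<open>The paper's \<open>\<Phi>_l\<close>, with \<open>\<integral>_-1^x (x - t) P_l(t) dt\<close> written as \<open>x \<integral> P_l - \<integral> t P_l\<close>.\<close>
definition legendre_Phi :: "nat \<Rightarrow> real poly" where
  "legendre_Phi l = smult (integral {-1..1} (\<lambda>t. (t - 1) * legendre l t) / 2) [:1, 1:]
     + [:0, 1:] * primitive (jacobi_poly 0 0 l) - primitive ([:0, 1:] * jacobi_poly 0 0 l)"

lemma pderiv_pderiv_legendre_Phi: "pderiv (pderiv (legendre_Phi l)) = jacobi_poly 0 0 l"
  unfolding legendre_Phi_def
  by (simp add: pderiv_add pderiv_diff pderiv_mult pderiv_primitive pderiv_pCons pderiv_smult)

lemma degree_legendre_Phi: "degree (legendre_Phi l) \<le> l + 2"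
proof -
  have "degree ([:0, 1:] * primitive (jacobi_poly 0 0 l)) \<le> l + 2"
    using degree_mult_le[of "[:0, 1::real:]" "primitive (jacobi_poly 0 0 l)"]
      degree_primitive[of "jacobi_poly 0 0 l"] by (simp add: degree_jacobi_poly)
  moreover have "degree (primitive ([:0, 1:] * jacobi_poly 0 0 l)) \<le> l + 2"
    using degree_primitive[of "[:0, 1:] * jacobi_poly 0 0 l"]
      degree_mult_le[of "[:0, 1::real:]" "jacobi_poly 0 0 l"] by (simp add: degree_jacobi_poly)
  moreover have "degree (smult (integral {-1..1} (\<lambda>t. (t - 1) * legendre l t) / 2) [:1, 1::real:]) \<le> l + 2"
    by (rule order.trans[OF degree_smult_le]) simp
  ultimately show ?thesis unfolding legendre_Phi_def by (intro degree_diff_le degree_add_le)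
qed

lemma poly_legendre_Phi:
  assumes "x \<in> {-1..1}"
  shows "poly (legendre_Phi l) x = (1 + x) / 2 * integral {-1..1} (\<lambda>t. (t - 1) * legendre l t)
    + integral {-1..x} (\<lambda>t. (x - t) * legendre l t)"
proof -
  have "integral {-1..x} (\<lambda>t. (x - t) * legendre l t) =
      integral {-1..x} (\<lambda>t. x * poly (jacobi_poly 0 0 l) t - poly ([:0, 1:] * jacobi_poly 0 0 l) t)"
    unfolding legendre_def jacobi_eq_poly by (simp add: algebra_simps)
  also have "\<dots> = integral {-1..x} (\<lambda>t. x * poly (jacobi_poly 0 0 l) t)
      - integral {-1..x} (poly ([:0, 1:] * jacobi_poly 0 0 l))"
    by (rule integral_diff) (intro integrable_on_mult_right poly_integrable_on, rule poly_integrable_on)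
  also have "\<dots> = x * poly (primitive (jacobi_poly 0 0 l)) x - poly (primitive ([:0, 1:] * jacobi_poly 0 0 l)) x"
    using assms by (simp add: poly_primitive_eq_integral integral_mult_right)
  finally have e: "integral {-1..x} (\<lambda>t. (x - t) * legendre l t) =
    x * poly (primitive (jacobi_poly 0 0 l)) x - poly (primitive ([:0, 1:] * jacobi_poly 0 0 l)) x" .
  show ?thesis unfolding e legendre_Phi_def by (simp add: algebra_simps)
qed

lemma poly_legendre_Phi_minus_one: "poly (legendre_Phi l) (-1) = 0"
  using poly_legendre_Phi[of "-1" l] by simp

lemma poly_legendre_Phi_one: "poly (legendre_Phi l) 1 = 0"
  using poly_legendre_Phi[of 1 l] integral_neg[of "{-1..1}" "\<lambda>t. (t - 1) * legendre l t"]
  by (simp add: algebra_simps)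

lemma birkhoff2_formula:
  fixes N :: nat and al be \<mu> :: real and xs w :: "nat \<Rightarrow> real"
  assumes N: "N \<ge> 2" and al: "al > -1" and be: "be > -1"
    and jgl: "JGL al be N xs w" and j: "j \<in> {1..N-1}" and mu: "1 < \<mu>" "\<mu> < 2"
  defines "\<xi> \<equiv> \<lambda>n. 1 / jacobi_gamma al be n *
    ((xs j - 1) * jacobi al be N (-1) / (2 * (be + 1) * jacobi al be N (xs j)) * jacobi al be n (-1) * w 0
     - (1 + xs j) * jacobi al be N 1 / (2 * (al + 1) * jacobi al be N (xs j)) * jacobi al be n 1 * w N
     + jacobi al be n (xs j) * w j)"
  shows "(\<exists>!q. birkhoff2 \<mu> N xs j q) \<and>
    (\<forall>q. birkhoff2 \<mu> N xs j q \<longrightarrow> (\<forall>x\<in>{-1..1}. poly q x = 1 / (1 + xs j) powr (2 - \<mu>) *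
      (\<Sum>l\<le>N-2. Gamma (real l - \<mu> + 3) / fact l *
        (\<Sum>n=l..N-2. conn_coeff al be (\<mu> - 2) (2 - \<mu>) l n * \<xi> n)
        * ((1 + x) / 2 * integral {-1..1} (\<lambda>t. (t - 1) * legendre l t)
           + integral {-1..x} (\<lambda>t. (x - t) * legendre l t)))))"
proof -
  obtain p where p: "degree p \<le> N - 2" "\<forall>i\<in>{1..N-1}. poly p (xs i) = (if i = j then 1 else 0)"
     "poly p (-1) = (xs j - 1) * jacobi al be N (-1) / (2 * (be + 1) * jacobi al be N (xs j))"
     "poly p 1 = - ((1 + xs j) * jacobi al be N 1 / (2 * (al + 1) * jacobi al be N (xs j)))"
    using JGL_lagrange_basis_interior[OF jgl N al be j] by blast
  define c where "c l = 1 / (1 + xs j) powr (2 - \<mu>) * (Gamma (real l - \<mu> + 3) / fact l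
    * (\<Sum>n=l..N-2. conn_coeff al be (\<mu> - 2) (2 - \<mu>) l n * \<xi> n))" for l
  define F where "F = (\<Sum>l\<le>N-2. smult (c l) (legendre_Phi l))"
  have \<xi>: "\<xi> n = quad_sum N xs w (p * jacobi_poly al be n) / jacobi_gamma al be n" for n
  proof -
    have "{..N} - {1..N-1} = {0, N}" using N by auto
    then have "quad_sum N xs w (p * jacobi_poly al be n) = poly p (xs 0) * jacobi al be n (xs 0) * w 0
        + poly p (xs N) * jacobi al be n (xs N) * w N + jacobi al be n (xs j) * w j"
      using quad_sum_mult_cardinal[of "{1..N-1}" N j p xs w "jacobi_poly al be n"] j p(2) N
      by (simp add: poly_jacobi_poly)
    then show ?thesis using p(3,4) jgl unfolding \<xi>_def JGL_def by simp
  qed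
  have bF: "birkhoff2 \<mu> N xs j F"
    unfolding birkhoff2_def
  proof (intro conjI ballI)
    show "degree F \<le> N" unfolding F_def using N
      by (intro degree_sum_le order.trans[OF degree_smult_le] order.trans[OF degree_legendre_Phi]) auto
    show "poly F (-1) = 0" "poly F 1 = 0"
      unfolding F_def by (simp_all add: poly_sum poly_legendre_Phi_minus_one poly_legendre_Phi_one)
    fix i assume "i \<in> {1..N-1}"
    then show "caputo \<mu> (poly F) (xs i) = (if i = j then 1 else 0)"
      using caputo_discrete_jacobi_synthesis_nodes[OF jgl al be, of 2 \<mu> "N - 2" p legendre_Phi
        "{1..N-1}" j i] mu N p(1,2) j
      unfolding F_def c_def \<xi>
      by (simp add: numeral_2_eq_2 pderiv_pderiv_legendre_Phi[unfolded numeral_2_eq_2] algebra_simps)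
  qed
  have uniq: "q = F" if "birkhoff2 \<mu> N xs j q" for q
    using birkhoff2_unique[OF jgl N mu that bF] .
  have poly_F: "poly F x = (\<Sum>l\<le>N-2. c l * ((1 + x) / 2 * integral {-1..1} (\<lambda>t. (t - 1) * legendre l t)
      + integral {-1..x} (\<lambda>t. (x - t) * legendre l t)))" if "x \<in> {-1..1}" for x
    using that unfolding F_def by (simp add: poly_sum poly_legendre_Phi)
  show ?thesis
  proof (intro conjI allI impI ballI)
    show "\<exists>!q. birkhoff2 \<mu> N xs j q" using bF uniq by blast
    fix q x assume "birkhoff2 \<mu> N xs j q" "x \<in> {-1..1::real}"
    then show "poly q x = 1 / (1 + xs j) powr (2 - \<mu>) *
      (\<Sum>l\<le>N-2. Gamma (real l - \<mu> + 3) / fact l *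
        (\<Sum>n=l..N-2. conn_coeff al be (\<mu> - 2) (2 - \<mu>) l n * \<xi> n)
        * ((1 + x) / 2 * integral {-1..1} (\<lambda>t. (t - 1) * legendre l t)
           + integral {-1..x} (\<lambda>t. (x - t) * legendre l t)))"
      using uniq poly_F unfolding c_def by (simp add: sum_distrib_left mult_ac)
  qed
qed

theorem theorem4p2:
  fixes N :: nat and al be \<mu> :: real and xs w :: "nat \<Rightarrow> real"
  assumes N: "N \<ge> 2" and al: "al > -1" and be: "be > -1"
    and jgl: "JGL al be N xs w"
  shows
   "(\<forall>j\<in>{1..N}. 0 < \<mu> \<and> \<mu> < 1 \<longrightarrow>
      (\<exists>!q. birkhoff1 \<mu> N xs j q) \<and>
      (\<forall>q. birkhoff1 \<mu> N xs j q \<longrightarrow> (\<forall>x\<in>{-1..1}.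
         poly q x =
           1 / (1 + xs j) powr (1 - \<mu>) *
           (\<Sum>l\<le>N-1. Gamma (real l - \<mu> + 2) / fact l *
              (\<Sum>n=l..N-1. conn_coeff al be (\<mu> - 1) (1 - \<mu>) l n *
                 (1 / jacobi_gamma al be n *
                   (- (if j = N then al + 1 else 1) / (be + 1)
                        * jacobi al be N (-1) / jacobi al be N (xs j)
                        * jacobi al be n (-1) * w 0
                    + jacobi al be n (xs j) * w j)))
              * integral {-1..x} (legendre l))))) \<and>
    (\<forall>j\<in>{1..N-1}. 1 < \<mu> \<and> \<mu> < 2 \<longrightarrow>
      (\<exists>!q. birkhoff2 \<mu> N xs j q) \<and>
      (\<forall>q. birkhoff2 \<mu> N xs j q \<longrightarrow> (\<forall>x\<in>{-1..1}.
         poly q x =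
           1 / (1 + xs j) powr (2 - \<mu>) *
           (\<Sum>l\<le>N-2. Gamma (real l - \<mu> + 3) / fact l *
              (\<Sum>n=l..N-2. conn_coeff al be (\<mu> - 2) (2 - \<mu>) l n *
                 (1 / jacobi_gamma al be n *
                   ((xs j - 1) * jacobi al be N (-1) / (2 * (be + 1) * jacobi al be N (xs j))
                        * jacobi al be n (-1) * w 0
                    - (1 + xs j) * jacobi al be N 1 / (2 * (al + 1) * jacobi al be N (xs j))
                        * jacobi al be n 1 * w N
                    + jacobi al be n (xs j) * w j)))
              * ((1 + x) / 2 * integral {-1..1} (\<lambda>t. (t - 1) * legendre l t)
                 + integral {-1..x} (\<lambda>t. (x - t) * legendre l t))))))"
  using birkhoff1_formula[OF N al be jgl] birkhoff2_formula[OF N al be jgl] by blast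

end
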